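(* Let $\mathbb{X}$ be a topological space with viable base $\Omega_0$, $\iota:X\to\widehat{X}$ the canonical map, and $\mathbb{D}$ a bc-domain with basis $D_0$. The map $\gamma:\widehat{\mathbb{B}}\to\mathbb{B}_{\mathrm{abs}}$, $\gamma(f)=f\circ\iota$, is a bijection with $\gamma\big(\bigsqcup_{i}b_i\chi_{\mathcal{O}_{{\downarrow}W_i}}\big)=\bigsqcup_i b_i\chi_{W_i}$, and for all $f,g\in\widehat{\mathbb{B}}$: $f\ll g$ (in $[\widehat{\mathbb{X}}_{\Omega_0}\to\mathbb{D}]$) if and only if $\gamma(f)\prec\gamma(g)$.
   Context: A viable base of $\mathbb{X}=(X,\tau_{\mathbb{X}})$ is a family $\Omega_0\subseteq\tau_{\mathbb{X}}$ closed under finite unions and finite intersections (so $\emptyset,X\in\Omega_0$) which is a base of $\tau_{\mathbb{X}}$. ${\downarrow}W=\{U\in\Omega_0:U\subseteq W\}$; $\mathrm{Idl}(\Omega_0)$ is the complete lattice of ideals (nonempty, downward closed, directed subsets) of $(\Omega_0,\subseteq)$. $\widehat{\mathbb{X}}_{\Omega_0}$ is the set $\widehat{X}$ of completely prime filters of $\mathrm{Idl}(\Omega_0)$ (nonempty upward closed sets closed under binary meets with $\bigvee A\in F\Rightarrow A\cap F\neq\emptyset$), topologized by open sets $\mathcal{O}_I=\{y:I\in y\}$; $\iota(x)=\{I: x\in\bigcup I\}$. A bc-domain is a continuous dcpo with least element $\bot$ in which bounded subsets have joins; $\ll$ is way-below; $\twoheaduparrow b=\{d:b\ll d\}$. $b\chi_O$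 has value $b$ on $O$ and $\bot$ elsewhere; a family $\{b_i\chi_{O_i}\}_{i\in I}$ is consistent if for every $J\subseteq I$ with $\bigcap_{j\in J}O_j\neq\emptyset$ the $b_j$ ($j\in J$) have an upper bound; joins are pointwise. $\widehat{\mathbb{B}}$ = pointwise joins of finite consistent families $b_i\chi_{\mathcal{O}_{{\downarrow}W_i}}$ with $W_i\in\Omega_0$, $b_i\in D_0$ (functions on $\widehat{X}$). $\mathbb{B}_{\mathrm{abs}}$ = pointwise joins of finite consistent families $b_i\chi_{O_i}$ with $O_i\in\Omega_0$, $b_i\in D_0$ (functions on $X$). The relation $\prec$ on $\mathbb{B}_{\mathrm{abs}}$: $\bigsqcup_{i\in I}b_i\chi_{O_i}\prec h$ iff $O_i\subseteq h^{-1}(\twoheaduparrow b_i)$ for all $i\in I$. *)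

theory Defs
  imports "HOL-Analysis.Analysis"
begin

definition viable_base :: "'a topology \<Rightarrow> 'a set set \<Rightarrow> bool" where
  "viable_base X \<Omega>0 \<longleftrightarrow>
     (\<forall>U\<in>\<Omega>0. openin X U) \<and>
     {} \<in> \<Omega>0 \<and> topspace X \<in> \<Omega>0 \<and>
     (\<forall>U\<in>\<Omega>0. \<forall>V\<in>\<Omega>0. U \<union> V \<in> \<Omega>0 \<and> U \<inter> V \<in> \<Omega>0) \<and>
     (\<forall>U. openin X U \<longrightarrow> (\<exists>\<F>\<subseteq>\<Omega>0. U = \<Union>\<F>))"

definition down_base :: "'a set set \<Rightarrow> 'a set \<Rightarrow> 'a set set" where
  "down_base \<Omega>0 W = {U\<in>\<Omega>0. U \<subseteq> W}"

definition Idl :: "'a set set \<Rightarrow> 'a set set set" where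
  "Idl \<Omega>0 = {I. I \<subseteq> \<Omega>0 \<and> I \<noteq> {} \<and>
              (\<forall>U\<in>I. \<forall>V\<in>\<Omega>0. V \<subseteq> U \<longrightarrow> V \<in> I) \<and>
              (\<forall>U\<in>I. \<forall>V\<in>I. \<exists>Z\<in>I. U \<subseteq> Z \<and> V \<subseteq> Z)}"

definition idl_Sup :: "'a set set \<Rightarrow> 'a set set set \<Rightarrow> 'a set set" where
  "idl_Sup \<Omega>0 A = \<Inter>{J\<in>Idl \<Omega>0. \<Union>A \<subseteq> J}"

text \<open>completely prime filters of Idl(Omega0); meets are intersections\<close>
definition cp_filter :: "'a set set \<Rightarrow> 'a set set set \<Rightarrow> bool" where
  "cp_filter \<Omega>0 F \<longleftrightarrow>
     F \<subseteq> Idl \<Omega>0 \<and> F \<noteq> {} \<and>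
     (\<forall>I\<in>F. \<forall>J\<in>Idl \<Omega>0. I \<subseteq> J \<longrightarrow> J \<in> F) \<and>
     (\<forall>I\<in>F. \<forall>J\<in>F. I \<inter> J \<in> F) \<and>
     (\<forall>A\<subseteq>Idl \<Omega>0. idl_Sup \<Omega>0 A \<in> F \<longrightarrow> A \<inter> F \<noteq> {})"

definition Xhat :: "'a set set \<Rightarrow> 'a set set set set" where
  "Xhat \<Omega>0 = {F. cp_filter \<Omega>0 F}"

definition Ohat :: "'a set set \<Rightarrow> 'a set set \<Rightarrow> 'a set set set set" where
  "Ohat \<Omega>0 I = {y\<in>Xhat \<Omega>0. I \<in> y}"

definition Xhat_top :: "'a set set \<Rightarrow> 'a set set set topology" where
  "Xhat_top \<Omega>0 = topology_generated_by {Ohat \<Omega>0 I | I. I \<in> Idl \<Omega>0}"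

definition iota :: "'a set set \<Rightarrow> 'a \<Rightarrow> 'a set set set" where
  "iota \<Omega>0 x = {I\<in>Idl \<Omega>0. x \<in> \<Union>I}"

definition dom_directed :: "'d::order set \<Rightarrow> bool" where
  "dom_directed S \<longleftrightarrow> S \<noteq> {} \<and> (\<forall>x\<in>S. \<forall>y\<in>S. \<exists>z\<in>S. x \<le> z \<and> y \<le> z)"

definition is_lub_in :: "'d::order set \<Rightarrow> 'd set \<Rightarrow> 'd \<Rightarrow> bool" where
  "is_lub_in P S x \<longleftrightarrow> x \<in> P \<and> (\<forall>s\<in>S. s \<le> x) \<and> (\<forall>y\<in>P. (\<forall>s\<in>S. s \<le> y) \<longrightarrow> x \<le> y)"

definition way_below_in :: "'d::order set \<Rightarrow> 'd \<Rightarrow> 'd \<Rightarrow> bool" where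
  "way_below_in P x y \<longleftrightarrow>
     (\<forall>S s. S \<subseteq> P \<longrightarrow> dom_directed S \<longrightarrow> is_lub_in P S s \<longrightarrow> y \<le> s \<longrightarrow> (\<exists>d\<in>S. x \<le> d))"

abbreviation way_below :: "'d::order \<Rightarrow> 'd \<Rightarrow> bool" (infix "\<lless>" 50) where
  "x \<lless> y \<equiv> way_below_in UNIV x y"

definition dlub :: "'d::order set \<Rightarrow> 'd" where
  "dlub S = (THE x. is_lub_in UNIV S x)"

definition dbot :: "'d::order" where
  "dbot = dlub {}"

text \<open>D (the whole type 'd) is a bc-domain with basis D0: a dcpo in which every
  bounded subset has a join (hence a least element), and every element is the
  directed join of the basis elements way below it (hence D is continuous).\<close>
definition bc_domain_with_basis :: "('d::order) set \<Rightarrow> bool" where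
  "bc_domain_with_basis D0 \<longleftrightarrow>
     (\<forall>S::'d set. dom_directed S \<longrightarrow> (\<exists>s. is_lub_in UNIV S s)) \<and>
     (\<forall>S::'d set. (\<exists>u. \<forall>s\<in>S. s \<le> u) \<longrightarrow> (\<exists>s. is_lub_in UNIV S s)) \<and>
     (\<forall>x. dom_directed {b\<in>D0. b \<lless> x} \<and> is_lub_in UNIV {b\<in>D0. b \<lless> x} x)"

definition scott_open :: "'d::order set \<Rightarrow> bool" where
  "scott_open U \<longleftrightarrow>
     (\<forall>x y. x \<in> U \<longrightarrow> x \<le> y \<longrightarrow> y \<in> U) \<and>
     (\<forall>S s. dom_directed S \<longrightarrow> is_lub_in UNIV S s \<longrightarrow> s \<in> U \<longrightarrow> S \<inter> U \<noteq> {})"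

text \<open>the function space [T -> D] of continuous maps (D with the Scott topology),
  ordered pointwise; functions are extended by bottom outside topspace T.\<close>
definition cont_fun_space :: "'x topology \<Rightarrow> ('x \<Rightarrow> 'd::order) set" where
  "cont_fun_space T = {f. (\<forall>U. scott_open U \<longrightarrow> openin T {y\<in>topspace T. f y \<in> U}) \<and>
                          (\<forall>y. y \<notin> topspace T \<longrightarrow> f y = dbot)}"

text \<open>pointwise join of the family b_i chi_{O_i}, i in I\<close>
definition step_join :: "nat set \<Rightarrow> (nat \<Rightarrow> 'd::order) \<Rightarrow> (nat \<Rightarrow> 'x set) \<Rightarrow> 'x \<Rightarrow> 'd" where
  "step_join I b Os = (\<lambda>x. dlub {b i | i. i \<in> I \<and> x \<in> Os i})"

definition consistent_family :: "nat set \<Rightarrow> (nat \<Rightarrow> 'd::order) \<Rightarrow> (nat \<Rightarrow> 'x set) \<Rightarrow> bool" where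
  "consistent_family I b Os \<longleftrightarrow>
     (\<forall>J\<subseteq>I. (\<Inter>j\<in>J. Os j) \<noteq> {} \<longrightarrow> (\<exists>u. \<forall>j\<in>J. b j \<le> u))"

definition Bhat :: "'a set set \<Rightarrow> 'd::order set \<Rightarrow> ('a set set set \<Rightarrow> 'd) set" where
  "Bhat \<Omega>0 D0 = {step_join I b (\<lambda>i. Ohat \<Omega>0 (down_base \<Omega>0 (W i))) | I b W.
      finite I \<and> (\<forall>i\<in>I. W i \<in> \<Omega>0 \<and> b i \<in> D0) \<and>
      consistent_family I b (\<lambda>i. Ohat \<Omega>0 (down_base \<Omega>0 (W i)))}"

definition B_abs :: "'a set set \<Rightarrow> 'd::order set \<Rightarrow> ('a \<Rightarrow> 'd) set" where
  "B_abs \<Omega>0 D0 = {step_join I b Os | I b Os.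
      finite I \<and> (\<forall>i\<in>I. Os i \<in> \<Omega>0 \<and> b i \<in> D0) \<and> consistent_family I b Os}"

definition abs_prec :: "'a set set \<Rightarrow> 'd::order set \<Rightarrow> ('a \<Rightarrow> 'd) \<Rightarrow> ('a \<Rightarrow> 'd) \<Rightarrow> bool" where
  "abs_prec \<Omega>0 D0 f h \<longleftrightarrow>
     (\<exists>I b Os. finite I \<and> (\<forall>i\<in>I. Os i \<in> \<Omega>0 \<and> b i \<in> D0) \<and> consistent_family I b Os \<and>
        f = step_join I b Os \<and> (\<forall>i\<in>I. Os i \<subseteq> h -` {d. b i \<lless> d}))"

end

theory Submission
  imports Defs
begin

text \<open>A point of the completion, a completely prime filter of ideals of the base, cannot be told
  apart from a point of X by finitely many basic sets \<open>O\<^sub>\<down>\<^sub>W\<close>: being prime for finite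
  unions and closed under finite intersections, it singles out a nonempty Boolean combination of them.
  Step functions only look at finitely many basic sets, so restriction along \<open>\<iota>\<close> is injective
  and preserves consistency, which gives the bijection.

  For the way-below relation, the sets \<open>O\<^sub>\<down>\<^sub>W\<close> are compact: a directed open cover with no member
  containing \<open>O\<^sub>\<down>\<^sub>W\<close> yields, via a prime ideal containing the covered basic sets but not W, a
  point of \<open>O\<^sub>\<down>\<^sub>W\<close> outside the cover. Hence a step function with values way below g on compact
  steps is way below g, which is the direction from \<open>\<prec>\<close>. Conversely g is the directed join of
  the step functions pointwise way below it, because D is continuous and g does not decrease on the
  neighbourhood cut out by the basic sets active at a point; so \<open>f \<lless> g\<close> puts f below one of
  them, and this is \<open>\<prec>\<close>.\<close>

lemma is_lub_in_upper: "is_lub_in P S x \<Longrightarrow> s \<in> S \<Longrightarrow> s \<le> x"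
  by (simp add: is_lub_in_def)

lemma is_lub_in_least: "is_lub_in P S x \<Longrightarrow> u \<in> P \<Longrightarrow> (\<And>s. s \<in> S \<Longrightarrow> s \<le> u) \<Longrightarrow> x \<le> u"
  by (simp add: is_lub_in_def)

lemma is_lub_in_unique: "is_lub_in P S x \<Longrightarrow> is_lub_in P S x' \<Longrightarrow> x = x'"
  by (meson antisym is_lub_in_def)

lemma dlub_eqI: "is_lub_in UNIV S x \<Longrightarrow> dlub S = x"
  unfolding dlub_def using is_lub_in_unique by blast

lemma is_lub_in_singleton: "is_lub_in UNIV {x} x"
  by (simp add: is_lub_in_def)

lemma dom_directed_singleton: "dom_directed {x}"
  by (simp add: dom_directed_def)

lemma dom_directed_nonempty: "dom_directed S \<Longrightarrow> S \<noteq> {}"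
  by (simp add: dom_directed_def)

lemma dom_directed_upper_bound:
  "dom_directed S \<Longrightarrow> x \<in> S \<Longrightarrow> y \<in> S \<Longrightarrow> \<exists>z\<in>S. x \<le> z \<and> y \<le> z"
  by (simp add: dom_directed_def)

lemma dom_directed_finite_upper_bound:
  assumes S: "dom_directed S"
  shows "finite F \<Longrightarrow> F \<subseteq> S \<Longrightarrow> \<exists>d\<in>S. \<forall>k\<in>F. k \<le> d"
proof (induction F rule: finite_induct)
  case empty
  then show ?case using dom_directed_nonempty[OF S] by blast
next
  case (insert x F)
  then obtain d where d: "d \<in> S" "\<forall>k\<in>F. k \<le> d" by blast
  obtain d' where "d' \<in> S" "x \<le> d'" "d \<le> d'"
    using dom_directed_upper_bound[OF S, of x d] insert.prems d by blast
  then show ?case using d order_trans by blast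
qed

lemma dom_directed_pointwise:
  assumes S: "dom_directed (S :: ('x \<Rightarrow> 'e::order) set)"
  shows "dom_directed {k y | k. k \<in> S}"
  unfolding dom_directed_def
proof (intro conjI ballI)
  show "{k y |k. k \<in> S} \<noteq> {}" using dom_directed_nonempty[OF S] by blast
  fix a1 a2 assume "a1 \<in> {k y |k. k \<in> S}" "a2 \<in> {k y |k. k \<in> S}"
  then obtain k1 k2 where k: "k1 \<in> S" "k2 \<in> S" "a1 = k1 y" "a2 = k2 y" by blast
  then obtain k3 where "k3 \<in> S" "k1 \<le> k3" "k2 \<le> k3" using dom_directed_upper_bound[OF S] by blast
  then show "\<exists>z\<in>{k y |k. k \<in> S}. a1 \<le> z \<and> a2 \<le> z" using k by (auto simp: le_fun_def)
qed

lemma way_below_iff: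
  "x \<lless> y \<longleftrightarrow> (\<forall>S s. dom_directed S \<longrightarrow> is_lub_in UNIV S s \<longrightarrow> y \<le> s \<longrightarrow> (\<exists>d\<in>S. x \<le> d))"
  by (simp add: way_below_in_def)

lemma way_below_imp_le: "a \<lless> b \<Longrightarrow> a \<le> b"
  unfolding way_below_iff using dom_directed_singleton is_lub_in_singleton by fastforce

lemma way_below_mono: "a \<le> b \<Longrightarrow> b \<lless> c \<Longrightarrow> c \<le> d \<Longrightarrow> a \<lless> d"
  unfolding way_below_iff by (meson order_trans)

lemma way_below_lub_Un:
  assumes A1: "is_lub_in UNIV A1 a1" "a1 \<lless> z" and A2: "is_lub_in UNIV A2 a2" "a2 \<lless> z"
    and A: "is_lub_in UNIV (A1 \<union> A2) a"
  shows "a \<lless> z"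
  unfolding way_below_iff
proof (intro allI impI)
  fix S s assume S: "dom_directed S" "is_lub_in UNIV S s" "z \<le> s"
  obtain d1 where d1: "d1 \<in> S" "a1 \<le> d1" using A1(2) S unfolding way_below_iff by blast
  obtain d2 where d2: "d2 \<in> S" "a2 \<le> d2" using A2(2) S unfolding way_below_iff by blast
  obtain d where d: "d \<in> S" "d1 \<le> d" "d2 \<le> d"
    using dom_directed_upper_bound[OF S(1) d1(1) d2(1)] by blast
  have "a \<le> d"
  proof (rule is_lub_in_least[OF A])
    fix t assume "t \<in> A1 \<union> A2"
    then show "t \<le> d"
      using is_lub_in_upper[OF A1(1)] is_lub_in_upper[OF A2(1)] d1 d2 d
      by (blast intro: order_trans)
  qed simp
  then show "\<exists>d\<in>S. a \<le> d" using d by blast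
qed

lemma scott_open_upward: "scott_open U \<Longrightarrow> x \<in> U \<Longrightarrow> x \<le> y \<Longrightarrow> y \<in> U"
  unfolding scott_open_def by blast

lemma scott_open_lub:
  "scott_open U \<Longrightarrow> dom_directed S \<Longrightarrow> is_lub_in UNIV S s \<Longrightarrow> s \<in> U \<Longrightarrow> \<exists>d\<in>S. d \<in> U"
  unfolding scott_open_def by blast

locale bc_domain =
  fixes D0 :: "'d::order set"
  assumes bc_domain: "bc_domain_with_basis D0"
begin

lemma directed_lub: "dom_directed (S :: 'd set) \<Longrightarrow> is_lub_in UNIV S (dlub S)"
proof -
  assume "dom_directed S"
  then obtain x where "is_lub_in UNIV S x"
    using bc_domain unfolding bc_domain_with_basis_def by blast
  then show ?thesis using dlub_eqI[of S x] by simp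
qed

lemma bounded_lub: "(\<And>s. s \<in> (S :: 'd set) \<Longrightarrow> s \<le> u) \<Longrightarrow> is_lub_in UNIV S (dlub S)"
proof -
  assume "\<And>s. s \<in> S \<Longrightarrow> s \<le> u"
  then obtain x where "is_lub_in UNIV S x"
    using bc_domain unfolding bc_domain_with_basis_def by blast
  then show ?thesis using dlub_eqI[of S x] by simp
qed

lemma basis_approximants_directed: "dom_directed {b\<in>D0. b \<lless> x}"
  using bc_domain unfolding bc_domain_with_basis_def by blast

lemma basis_approximants_lub: "is_lub_in UNIV {b\<in>D0. b \<lless> x} x"
  using bc_domain unfolding bc_domain_with_basis_def by blast

lemma dlub_empty: "dlub {} = (dbot :: 'd)"
  by (simp add: dbot_def)

lemma dbot_least: "dbot \<le> (x :: 'd)"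
  using is_lub_in_least[OF bounded_lub[of "{}"]] by (simp add: dbot_def)

lemma dbot_way_below: "dbot \<lless> (x :: 'd)"
  unfolding way_below_iff using dom_directed_nonempty dbot_least by blast

lemma way_below_interpolate:
  assumes xy: "x \<lless> (y :: 'd)"
  shows "\<exists>c\<in>D0. x \<lless> c \<and> c \<lless> y"
proof -
  define A where "A = {a\<in>D0. \<exists>c\<in>D0. a \<lless> c \<and> c \<lless> y}"
  have "dom_directed A"
    unfolding dom_directed_def
  proof (intro conjI ballI)
    obtain c where "c \<in> D0" "c \<lless> y"
      using dom_directed_nonempty[OF basis_approximants_directed[of y]] by blast
    moreover obtain a where "a \<in> D0" "a \<lless> c"
      using dom_directed_nonempty[OF basis_approximants_directed[of c]] by blast
    ultimately show "A \<noteq> {}" unfolding A_def by blast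
  next
    fix a1 a2 assume "a1 \<in> A" "a2 \<in> A"
    then obtain c1 c2 where c: "c1 \<in> D0" "a1 \<lless> c1" "c1 \<lless> y" "a1 \<in> D0"
      "c2 \<in> D0" "a2 \<lless> c2" "c2 \<lless> y" "a2 \<in> D0"
      unfolding A_def by blast
    obtain c3 where c3: "c3 \<in> D0" "c3 \<lless> y" "c1 \<le> c3" "c2 \<le> c3"
      using dom_directed_upper_bound[OF basis_approximants_directed[of y], of c1 c2] c by blast
    have "a1 \<lless> c3" "a2 \<lless> c3" using way_below_mono c c3 by blast+
    then obtain a3 where "a3 \<in> D0" "a3 \<lless> c3" "a1 \<le> a3" "a2 \<le> a3"
      using dom_directed_upper_bound[OF basis_approximants_directed[of c3], of a1 a2] c by blast
    then show "\<exists>z\<in>A. a1 \<le> z \<and> a2 \<le> z" unfolding A_def using c3 by blast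
  qed
  moreover have "is_lub_in UNIV A y"
    unfolding is_lub_in_def
  proof (intro conjI ballI allI impI)
    fix a assume "a \<in> A"
    then show "a \<le> y" unfolding A_def using way_below_imp_le order_trans by blast
  next
    fix u assume u: "\<forall>s\<in>A. s \<le> u"
    have "c \<le> u" if "c \<in> D0" "c \<lless> y" for c
      by (rule is_lub_in_least[OF basis_approximants_lub[of c]]) (use that u in \<open>auto simp: A_def\<close>)
    then show "y \<le> u" using is_lub_in_least[OF basis_approximants_lub[of y]] by blast
  qed simp
  ultimately obtain a where "a \<in> A" "x \<le> a" using xy unfolding way_below_iff by blast
  then show ?thesis unfolding A_def using way_below_mono by blast
qed

lemma scott_open_way_above: "scott_open {d. b \<lless> (d :: 'd)}"
  unfolding scott_open_def
proof (intro conjI allI impI)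
  fix x y :: 'd assume "x \<in> {d. b \<lless> d}" "x \<le> y"
  then show "y \<in> {d. b \<lless> d}" using way_below_mono by blast
next
  fix S s assume S: "dom_directed S" "is_lub_in UNIV S s" "s \<in> {d. b \<lless> d}"
  then obtain c where c: "b \<lless> c" "c \<lless> s" using way_below_interpolate by blast
  then obtain d where "d \<in> S" "c \<le> d" using S unfolding way_below_iff by blast
  then show "S \<inter> {d. b \<lless> d} \<noteq> {}" using c way_below_mono by blast
qed

end

lemma step_join_cong:
  "{i\<in>I. y \<in> C i} = {i\<in>I. y' \<in> C' i} \<Longrightarrow> step_join I b C y = step_join I b C' y'"
proof -
  assume "{i\<in>I. y \<in> C i} = {i\<in>I. y' \<in> C' i}"
  then have "{b i | i. i \<in> I \<and> y \<in> C i} = {b i | i. i \<in> I \<and> y' \<in> C' i}" by blast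
  then show ?thesis unfolding step_join_def by (rule arg_cong)
qed

lemma consistent_family_transfer:
  assumes "consistent_family I b C'"
    and "\<And>J. J \<subseteq> I \<Longrightarrow> (\<Inter>j\<in>J. C j) \<noteq> {} \<Longrightarrow> (\<Inter>j\<in>J. C' j) \<noteq> {}"
  shows "consistent_family I b C"
  unfolding consistent_family_def
proof (intro allI impI)
  fix J assume J: "J \<subseteq> I" "(\<Inter>j\<in>J. C j) \<noteq> {}"
  then have "(\<Inter>j\<in>J. C' j) \<noteq> {}" by (rule assms(2))
  then show "\<exists>u. \<forall>j\<in>J. b j \<le> u" using assms(1) J(1) unfolding consistent_family_def by simp
qed

text \<open>Families of steps are indexed by sets of naturals; two of them are merged by interleaving.\<close>

definition interleave :: "(nat \<Rightarrow> 'b) \<Rightarrow> (nat \<Rightarrow> 'b) \<Rightarrow> nat \<Rightarrow> 'b" where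
  "interleave f g i = (if even i then f (i div 2) else g (i div 2))"

definition interleave_index :: "nat set \<Rightarrow> nat set \<Rightarrow> nat set" where
  "interleave_index I J = (\<lambda>i. 2 * i) ` I \<union> (\<lambda>i. 2 * i + 1) ` J"

lemma finite_interleave_index: "finite I \<Longrightarrow> finite J \<Longrightarrow> finite (interleave_index I J)"
  by (simp add: interleave_index_def)

lemma interleave_index_cases:
  assumes "i \<in> interleave_index I J"
  obtains j where "j \<in> I" "i = 2 * j" | j where "j \<in> J" "i = 2 * j + 1"
  using assms unfolding interleave_index_def by blast

lemma interleave_even [simp]: "interleave f g (2 * j) = f j"
  and interleave_odd [simp]: "interleave f g (Suc (2 * j)) = g j"
  by (simp_all add: interleave_def)

lemma interleave_members:
  "{interleave b1 b2 i | i. i \<in> interleave_index I1 I2 \<and> y \<in> interleave C1 C2 i}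
    = {b1 i | i. i \<in> I1 \<and> y \<in> C1 i} \<union> {b2 i | i. i \<in> I2 \<and> y \<in> C2 i}"
proof (intro equalityI subsetI)
  fix z assume "z \<in> {interleave b1 b2 i | i. i \<in> interleave_index I1 I2 \<and> y \<in> interleave C1 C2 i}"
  then obtain i where
    i: "z = interleave b1 b2 i" "i \<in> interleave_index I1 I2" "y \<in> interleave C1 C2 i"
    by blast
  from i(2) show "z \<in> {b1 i | i. i \<in> I1 \<and> y \<in> C1 i} \<union> {b2 i | i. i \<in> I2 \<and> y \<in> C2 i}"
  proof (cases rule: interleave_index_cases)
    case (1 j)
    then have "z = b1 j" "y \<in> C1 j" using i(1,3) by simp_all
    then show ?thesis using 1(1) by blast
  next
    case (2 j)
    then have "z = b2 j" "y \<in> C2 j" using i(1,3) by simp_all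
    then show ?thesis using 2(1) by blast
  qed
next
  fix z assume "z \<in> {b1 i | i. i \<in> I1 \<and> y \<in> C1 i} \<union> {b2 i | i. i \<in> I2 \<and> y \<in> C2 i}"
  then consider j where "j \<in> I1" "y \<in> C1 j" "z = b1 j" | j where "j \<in> I2" "y \<in> C2 j" "z = b2 j"
    by blast
  then show "z \<in> {interleave b1 b2 i | i. i \<in> interleave_index I1 I2 \<and> y \<in> interleave C1 C2 i}"
  proof cases
    case (1 j)
    then have "2 * j \<in> interleave_index I1 I2" unfolding interleave_index_def by blast
    moreover have "z = interleave b1 b2 (2 * j)" "y \<in> interleave C1 C2 (2 * j)" using 1 by simp_all
    ultimately show ?thesis by blast
  next
    case (2 j)
    then have "2 * j + 1 \<in> interleave_index I1 I2" unfolding interleave_index_def by blast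
    moreover have "z = interleave b1 b2 (2 * j + 1)" "y \<in> interleave C1 C2 (2 * j + 1)"
      using 2 by simp_all
    ultimately show ?thesis by blast
  qed
qed

context bc_domain
begin

lemma cont_fun_space_lub_pointwise:
  fixes S :: "('x \<Rightarrow> 'd) set"
  assumes S: "S \<subseteq> cont_fun_space T" "dom_directed S" "is_lub_in (cont_fun_space T) S s"
  shows "is_lub_in UNIV {k y | k. k \<in> S} (s y)"
proof -
  define h where "h = (\<lambda>y. dlub {k y | k. k \<in> S})"
  have h_lub: "is_lub_in UNIV {k y | k. k \<in> S} (h y)" for y
    unfolding h_def by (rule directed_lub[OF dom_directed_pointwise[OF S(2)]])
  have "h \<in> cont_fun_space T"
    unfolding cont_fun_space_def
  proof (intro CollectI conjI allI impI)
    fix U :: "'d set" assume U: "scott_open U"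
    have "{y \<in> topspace T. h y \<in> U} = (\<Union>k\<in>S. {y \<in> topspace T. k y \<in> U})"
    proof (intro equalityI subsetI)
      fix y assume y: "y \<in> {y \<in> topspace T. h y \<in> U}"
      then obtain d where "d \<in> {k y | k. k \<in> S}" "d \<in> U"
        using scott_open_lub[OF U dom_directed_pointwise[OF S(2)] h_lub] by blast
      then show "y \<in> (\<Union>k\<in>S. {y \<in> topspace T. k y \<in> U})" using y by blast
    next
      fix y assume "y \<in> (\<Union>k\<in>S. {y \<in> topspace T. k y \<in> U})"
      then obtain k where k: "k \<in> S" "y \<in> topspace T" "k y \<in> U" by blast
      then have "k y \<le> h y" using is_lub_in_upper[OF h_lub] by blast
      then show "y \<in> {y \<in> topspace T. h y \<in> U}" using scott_open_upward[OF U] k by blast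
    qed
    moreover have "openin T {y \<in> topspace T. k y \<in> U}" if "k \<in> S" for k
      using that S(1) U unfolding cont_fun_space_def by blast
    ultimately show "openin T {y \<in> topspace T. h y \<in> U}"
      by (metis (no_types, lifting) imageE openin_Union)
  next
    fix y assume y: "y \<notin> topspace T"
    have outside: "k y = dbot" if "k \<in> S" for k :: "'x \<Rightarrow> 'd"
      using that S(1) y unfolding cont_fun_space_def by blast
    have "h y \<le> dbot"
    proof (rule is_lub_in_least[OF h_lub])
      fix d assume "d \<in> {k y | k. k \<in> S}"
      then obtain k where "k \<in> S" "d = k y" by blast
      then show "d \<le> dbot" using outside[of k] by simp
    qed simp
    then show "h y = dbot" using dbot_least by (rule antisym)
  qed
  moreover have "k \<le> h" if "k \<in> S" for k
    using that is_lub_in_upper[OF h_lub] unfolding le_fun_def by blast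
  ultimately have "s \<le> h" by (rule is_lub_in_least[OF S(3)])
  then have "s y \<le> h y" by (rule le_funD)
  moreover have "h y \<le> s y"
  proof (rule is_lub_in_least[OF h_lub])
    fix d assume "d \<in> {k y | k. k \<in> S}"
    then show "d \<le> s y" using is_lub_in_upper[OF S(3)] by (auto simp: le_fun_def)
  qed simp
  ultimately have "s y = h y" by (rule antisym)
  then show ?thesis using h_lub by simp
qed

lemma step_join_lub:
  fixes b :: "nat \<Rightarrow> 'd"
  assumes "consistent_family I b C"
  shows "is_lub_in UNIV {b i | i. i \<in> I \<and> y \<in> C i} (step_join I b C y)"
proof -
  have "{i\<in>I. y \<in> C i} \<subseteq> I" "y \<in> (\<Inter>j\<in>{i\<in>I. y \<in> C i}. C j)" by auto
  then obtain u where "\<forall>j\<in>{i\<in>I. y \<in> C i}. b j \<le> u"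
    using assms unfolding consistent_family_def by blast
  then show ?thesis unfolding step_join_def by (intro bounded_lub) blast
qed

lemma step_join_upper:
  fixes b :: "nat \<Rightarrow> 'd"
  assumes "consistent_family I b C" "i \<in> I" "y \<in> C i"
  shows "b i \<le> step_join I b C y"
  by (rule is_lub_in_upper[OF step_join_lub[OF assms(1)]]) (use assms(2,3) in blast)

lemma step_join_least:
  fixes b :: "nat \<Rightarrow> 'd"
  assumes "\<And>i. i \<in> I \<Longrightarrow> y \<in> C i \<Longrightarrow> b i \<le> u"
  shows "step_join I b C y \<le> u"
proof -
  have "is_lub_in UNIV {b i | i. i \<in> I \<and> y \<in> C i} (step_join I b C y)"
    unfolding step_join_def by (rule bounded_lub) (use assms in blast)
  then show ?thesis by (rule is_lub_in_least) (use assms in blast)+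
qed

lemma step_join_mono:
  fixes b :: "nat \<Rightarrow> 'd"
  assumes cons: "consistent_family I b C" and sub: "{i\<in>I. y \<in> C i} \<subseteq> {i\<in>I. y' \<in> C i}"
  shows "step_join I b C y \<le> step_join I b C y'"
proof (rule step_join_least)
  fix i assume "i \<in> I" "y \<in> C i"
  then show "b i \<le> step_join I b C y'" using sub by (intro step_join_upper[OF cons]) auto
qed

lemma step_join_outside:
  fixes b :: "nat \<Rightarrow> 'd"
  assumes "\<And>i. i \<in> I \<Longrightarrow> y \<notin> C i"
  shows "step_join I b C y = dbot"
proof -
  have empty: "{b i | i. i \<in> I \<and> y \<in> C i} = {}" using assms by blast
  show ?thesis unfolding step_join_def empty by (rule dlub_empty)
qed

lemma step_join_single:
  "step_join {i} (\<lambda>_. c) (\<lambda>_. V) y = (if y \<in> V then c else (dbot :: 'd))"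
proof -
  have "{(\<lambda>_. c) j | j. j \<in> {i} \<and> y \<in> V} = (if y \<in> V then {c} else {})" by auto
  then show ?thesis
    unfolding step_join_def by (simp add: dlub_empty dlub_eqI[OF is_lub_in_singleton])
qed

lemma step_join_in_cont_fun_space:
  fixes b :: "nat \<Rightarrow> 'd"
  assumes I: "finite I" and C: "\<And>i. i \<in> I \<Longrightarrow> openin T (C i)" and cons: "consistent_family I b C"
  shows "step_join I b C \<in> cont_fun_space T"
  unfolding cont_fun_space_def
proof (intro CollectI conjI allI impI)
  let ?f = "step_join I b C"
  fix U :: "'d set" assume U: "scott_open U"
  show "openin T {y \<in> topspace T. ?f y \<in> U}"
  proof (subst openin_subopen, intro ballI)
    fix y assume y: "y \<in> {y \<in> topspace T. ?f y \<in> U}"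
    define N where "N = (\<Inter>i\<in>{i\<in>I. y \<in> C i}. C i) \<inter> topspace T"
    have "openin T N" unfolding N_def using I C by (intro openin_INT) auto
    moreover have "N \<subseteq> {y \<in> topspace T. ?f y \<in> U}"
    proof
      fix y' assume "y' \<in> N"
      then have "?f y \<le> ?f y'" "y' \<in> topspace T"
        unfolding N_def by (auto intro!: step_join_mono[OF cons])
      then show "y' \<in> {y \<in> topspace T. ?f y \<in> U}" using U y unfolding scott_open_def by blast
    qed
    ultimately show "\<exists>N. openin T N \<and> y \<in> N \<and> N \<subseteq> {y \<in> topspace T. ?f y \<in> U}"
      using y unfolding N_def by blast
  qed
next
  fix y assume "y \<notin> topspace T"
  then show "step_join I b C y = dbot"
    using C openin_subset by (metis step_join_outside subsetD)
qed

lemma step_join_interleave_lub: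
  fixes c1 c2 :: "nat \<Rightarrow> 'd"
  assumes cons: "consistent_family J1 c1 C1" "consistent_family J2 c2 C2"
    and bound: "step_join J1 c1 C1 y \<le> u" "step_join J2 c2 C2 y \<le> u"
  shows "is_lub_in UNIV ({c1 i | i. i \<in> J1 \<and> y \<in> C1 i} \<union> {c2 i | i. i \<in> J2 \<and> y \<in> C2 i})
    (step_join (interleave_index J1 J2) (interleave c1 c2) (interleave C1 C2) y)"
  unfolding step_join_def interleave_members
proof (rule bounded_lub)
  fix a assume "a \<in> {c1 i | i. i \<in> J1 \<and> y \<in> C1 i} \<union> {c2 i | i. i \<in> J2 \<and> y \<in> C2 i}"
  then show "a \<le> u"
    using is_lub_in_upper[OF step_join_lub[OF cons(1)]]
      is_lub_in_upper[OF step_join_lub[OF cons(2)]] bound order_trans by blast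
qed

lemma consistent_family_interleave:
  fixes c1 c2 :: "nat \<Rightarrow> 'd"
  assumes cons: "consistent_family J1 c1 C1" "consistent_family J2 c2 C2"
    and bound: "\<And>y. step_join J1 c1 C1 y \<le> g y" "\<And>y. step_join J2 c2 C2 y \<le> g y"
  shows "consistent_family (interleave_index J1 J2) (interleave c1 c2) (interleave C1 C2)"
  unfolding consistent_family_def
proof (intro allI impI)
  fix J assume J: "J \<subseteq> interleave_index J1 J2" "(\<Inter>j\<in>J. interleave C1 C2 j) \<noteq> {}"
  then obtain y where y: "y \<in> (\<Inter>j\<in>J. interleave C1 C2 j)" by blast
  have "interleave c1 c2 j \<le> g y" if "j \<in> J" for j
  proof -
    have "interleave c1 c2 j \<in>
        {interleave c1 c2 i | i. i \<in> interleave_index J1 J2 \<and> y \<in> interleave C1 C2 i}"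
      using that J(1) y by blast
    then have "interleave c1 c2 j \<in> {c1 i | i. i \<in> J1 \<and> y \<in> C1 i} \<union> {c2 i | i. i \<in> J2 \<and> y \<in> C2 i}"
      unfolding interleave_members .
    then show ?thesis
      using is_lub_in_upper[OF step_join_lub[OF cons(1)]]
        is_lub_in_upper[OF step_join_lub[OF cons(2)]] bound[of y] order_trans by blast
  qed
  then show "\<exists>u. \<forall>j\<in>J. interleave c1 c2 j \<le> u" by blast
qed

end

section \<open>Viable bases and their ideals\<close>

locale viable_basis =
  fixes X :: "'a topology" and \<Omega> :: "'a set set"
  assumes viable: "viable_base X \<Omega>"
begin

lemma base_openin: "U \<in> \<Omega> \<Longrightarrow> openin X U"
  using viable unfolding viable_base_def by simp

lemma base_subset_topspace: "U \<in> \<Omega> \<Longrightarrow> U \<subseteq> topspace X"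
  using base_openin openin_subset by metis

lemma empty_in_base: "{} \<in> \<Omega>"
  using viable unfolding viable_base_def by simp

lemma topspace_in_base: "topspace X \<in> \<Omega>"
  using viable unfolding viable_base_def by simp

lemma base_Un: "U \<in> \<Omega> \<Longrightarrow> V \<in> \<Omega> \<Longrightarrow> U \<union> V \<in> \<Omega>"
  using viable unfolding viable_base_def by simp

lemma base_Int: "U \<in> \<Omega> \<Longrightarrow> V \<in> \<Omega> \<Longrightarrow> U \<inter> V \<in> \<Omega>"
  using viable unfolding viable_base_def by simp

lemma base_Union: "finite F \<Longrightarrow> F \<subseteq> \<Omega> \<Longrightarrow> \<Union>F \<in> \<Omega>"
  by (induction F rule: finite_induct) (auto intro: base_Un empty_in_base)

lemma base_Inter: "finite F \<Longrightarrow> F \<subseteq> \<Omega> \<Longrightarrow> topspace X \<inter> \<Inter>F \<in> \<Omega>"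
proof (induction F rule: finite_induct)
  case empty then show ?case using topspace_in_base by simp
next
  case (insert x F)
  then have "topspace X \<inter> \<Inter>(insert x F) = x \<inter> (topspace X \<inter> \<Inter>F)" by auto
  then show ?case using insert base_Int by auto
qed

lemma Idl_subset_base: "I \<in> Idl \<Omega> \<Longrightarrow> I \<subseteq> \<Omega>"
  by (simp add: Idl_def)

lemma Idl_nonempty: "I \<in> Idl \<Omega> \<Longrightarrow> I \<noteq> {}"
  by (simp add: Idl_def)

lemma Idl_downward: "I \<in> Idl \<Omega> \<Longrightarrow> U \<in> I \<Longrightarrow> V \<in> \<Omega> \<Longrightarrow> V \<subseteq> U \<Longrightarrow> V \<in> I"
  by (simp add: Idl_def)

lemma Idl_directed: "I \<in> Idl \<Omega> \<Longrightarrow> U \<in> I \<Longrightarrow> V \<in> I \<Longrightarrow> \<exists>Z\<in>I. U \<subseteq> Z \<and> V \<subseteq> Z"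
  by (simp add: Idl_def)

lemma empty_in_Idl: "I \<in> Idl \<Omega> \<Longrightarrow> {} \<in> I"
proof -
  assume I: "I \<in> Idl \<Omega>"
  then obtain U where "U \<in> I" using Idl_nonempty by blast
  then show ?thesis using Idl_downward[OF I _ empty_in_base] by simp
qed

lemma Idl_Un: "I \<in> Idl \<Omega> \<Longrightarrow> U \<in> I \<Longrightarrow> V \<in> I \<Longrightarrow> U \<union> V \<in> I"
proof -
  assume a: "I \<in> Idl \<Omega>" "U \<in> I" "V \<in> I"
  then obtain Z where "Z \<in> I" "U \<subseteq> Z" "V \<subseteq> Z" using Idl_directed by blast
  moreover have "U \<union> V \<in> \<Omega>" using a base_Un Idl_subset_base by (simp add: subset_iff)
  ultimately show ?thesis using Idl_downward[OF a(1)] by simp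
qed

lemma IdlI: "I \<subseteq> \<Omega> \<Longrightarrow> {} \<in> I \<Longrightarrow> (\<And>U V. U \<in> I \<Longrightarrow> V \<in> \<Omega> \<Longrightarrow> V \<subseteq> U \<Longrightarrow> V \<in> I)
   \<Longrightarrow> (\<And>U V. U \<in> I \<Longrightarrow> V \<in> I \<Longrightarrow> U \<union> V \<in> I) \<Longrightarrow> I \<in> Idl \<Omega>"
  unfolding Idl_def by (intro CollectI conjI ballI impI; blast)

lemma down_base_in_Idl: "W \<in> \<Omega> \<Longrightarrow> down_base \<Omega> W \<in> Idl \<Omega>"
  by (rule IdlI) (auto simp: down_base_def empty_in_base base_Un)

lemma down_base_self: "W \<in> \<Omega> \<Longrightarrow> W \<in> down_base \<Omega> W"
  by (simp add: down_base_def)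

lemma down_base_mono: "U \<subseteq> V \<Longrightarrow> down_base \<Omega> U \<subseteq> down_base \<Omega> V"
  by (auto simp: down_base_def)

lemma down_base_Int: "down_base \<Omega> (U \<inter> V) = down_base \<Omega> U \<inter> down_base \<Omega> V"
  by (auto simp: down_base_def)

lemma down_base_topspace: "down_base \<Omega> (topspace X) = \<Omega>"
  using base_subset_topspace by (auto simp: down_base_def)

lemma base_in_Idl: "\<Omega> \<in> Idl \<Omega>"
  using down_base_in_Idl[OF topspace_in_base] down_base_topspace by simp

lemma idl_Sup_in_Idl: "\<Union>A \<subseteq> \<Omega> \<Longrightarrow> idl_Sup \<Omega> A \<in> Idl \<Omega>"
proof -
  assume A: "\<Union>A \<subseteq> \<Omega>"
  define JJ where "JJ = {J\<in>Idl \<Omega>. \<Union>A \<subseteq> J}"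
  have OJ: "\<Omega> \<in> JJ" unfolding JJ_def using A base_in_Idl by simp
  have JI: "J \<in> Idl \<Omega>" if "J \<in> JJ" for J using that unfolding JJ_def by simp
  have "\<Inter>JJ \<in> Idl \<Omega>"
  proof (rule IdlI)
    show "\<Inter>JJ \<subseteq> \<Omega>" using OJ by (rule Inter_lower)
    show "{} \<in> \<Inter>JJ" using JI empty_in_Idl by simp
    show "V \<in> \<Inter>JJ" if "U \<in> \<Inter>JJ" "V \<in> \<Omega>" "V \<subseteq> U" for U V
      using that JI Idl_downward by blast
    show "U \<union> V \<in> \<Inter>JJ" if "U \<in> \<Inter>JJ" "V \<in> \<Inter>JJ" for U V
      using that JI Idl_Un by blast
  qed
  then show ?thesis unfolding idl_Sup_def JJ_def .
qed

lemma idl_Sup_upper: "\<Union>A \<subseteq> idl_Sup \<Omega> A"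
  unfolding idl_Sup_def by blast

lemma idl_Sup_least: "J \<in> Idl \<Omega> \<Longrightarrow> \<Union>A \<subseteq> J \<Longrightarrow> idl_Sup \<Omega> A \<subseteq> J"
  unfolding idl_Sup_def by blast

lemma Idl_Int: "I \<in> Idl \<Omega> \<Longrightarrow> J \<in> Idl \<Omega> \<Longrightarrow> I \<inter> J \<in> Idl \<Omega>"
  by (rule IdlI) (auto intro: empty_in_Idl Idl_Un Idl_downward dest: Idl_subset_base)

section \<open>The points of the completion\<close>

lemma Xhat_subset_Idl: "y \<in> Xhat \<Omega> \<Longrightarrow> I \<in> y \<Longrightarrow> I \<in> Idl \<Omega>"
  by (auto simp: Xhat_def cp_filter_def)

lemma Xhat_upward: "y \<in> Xhat \<Omega> \<Longrightarrow> I \<in> y \<Longrightarrow> J \<in> Idl \<Omega> \<Longrightarrow> I \<subseteq> J \<Longrightarrow> J \<in> y"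
  by (simp add: Xhat_def cp_filter_def)

lemma Xhat_Int: "y \<in> Xhat \<Omega> \<Longrightarrow> I \<in> y \<Longrightarrow> J \<in> y \<Longrightarrow> I \<inter> J \<in> y"
  by (simp add: Xhat_def cp_filter_def)

lemma Xhat_completely_prime:
  "y \<in> Xhat \<Omega> \<Longrightarrow> A \<subseteq> Idl \<Omega> \<Longrightarrow> idl_Sup \<Omega> A \<in> y \<Longrightarrow> \<exists>I\<in>A. I \<in> y"
proof -
  assume a: "y \<in> Xhat \<Omega>" "A \<subseteq> Idl \<Omega>" "idl_Sup \<Omega> A \<in> y"
  have "cp_filter \<Omega> y" using a(1) by (simp add: Xhat_def)
  then have "\<forall>A\<subseteq>Idl \<Omega>. idl_Sup \<Omega> A \<in> y \<longrightarrow> A \<inter> y \<noteq> {}"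
    unfolding cp_filter_def by (elim conjE) assumption
  then have "A \<inter> y \<noteq> {}" using a by blast
  then show ?thesis by blast
qed

lemma Xhat_nonempty: "y \<in> Xhat \<Omega> \<Longrightarrow> y \<noteq> {}"
  by (simp add: Xhat_def cp_filter_def)

lemma base_in_Xhat: "y \<in> Xhat \<Omega> \<Longrightarrow> \<Omega> \<in> y"
proof -
  assume y: "y \<in> Xhat \<Omega>"
  then obtain I where "I \<in> y" using Xhat_nonempty by blast
  then show ?thesis
    using y Xhat_upward[OF y _ base_in_Idl] Xhat_subset_Idl Idl_subset_base by blast
qed

lemma down_base_empty_notin_Xhat: "y \<in> Xhat \<Omega> \<Longrightarrow> down_base \<Omega> {} \<notin> y"
proof
  assume y: "y \<in> Xhat \<Omega>" and d: "down_base \<Omega> {} \<in> y"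
  have "down_base \<Omega> {} \<subseteq> idl_Sup \<Omega> {}"
    unfolding down_base_def idl_Sup_def using empty_in_Idl by auto
  moreover have "idl_Sup \<Omega> {} \<in> Idl \<Omega>" by (rule idl_Sup_in_Idl) auto
  ultimately have "idl_Sup \<Omega> {} \<in> y" using Xhat_upward[OF y d] by blast
  then show False using Xhat_completely_prime[OF y, of "{}"] by auto
qed

lemma Xhat_down_base_Un: "y \<in> Xhat \<Omega> \<Longrightarrow> U \<in> \<Omega> \<Longrightarrow> V \<in> \<Omega> \<Longrightarrow> down_base \<Omega> (U \<union> V) \<in> y
   \<Longrightarrow> down_base \<Omega> U \<in> y \<or> down_base \<Omega> V \<in> y"
proof -
  assume y: "y \<in> Xhat \<Omega>" and UV: "U \<in> \<Omega>" "V \<in> \<Omega>" and d: "down_base \<Omega> (U \<union> V) \<in> y"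
  define A where "A = {down_base \<Omega> U, down_base \<Omega> V}"
  have A: "A \<subseteq> Idl \<Omega>" using UV down_base_in_Idl unfolding A_def by simp
  have "\<Union>A \<subseteq> \<Omega>" using A Idl_subset_base by blast
  then have S: "idl_Sup \<Omega> A \<in> Idl \<Omega>" by (rule idl_Sup_in_Idl)
  have "U \<in> \<Union>A" "V \<in> \<Union>A" unfolding A_def using UV down_base_self by simp_all
  then have "U \<in> idl_Sup \<Omega> A" "V \<in> idl_Sup \<Omega> A"
    using idl_Sup_upper[of A] by (simp_all add: subset_iff)
  then have UVS: "U \<union> V \<in> idl_Sup \<Omega> A" using Idl_Un[OF S] by simp
  have "down_base \<Omega> (U \<union> V) \<subseteq> idl_Sup \<Omega> A"
  proof
    fix Z assume "Z \<in> down_base \<Omega> (U \<union> V)"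
    then have "Z \<in> \<Omega>" "Z \<subseteq> U \<union> V" unfolding down_base_def by simp_all
    then show "Z \<in> idl_Sup \<Omega> A" using Idl_downward[OF S UVS] by simp
  qed
  then have "idl_Sup \<Omega> A \<in> y" using Xhat_upward[OF y d S] by simp
  then obtain I where "I \<in> A" "I \<in> y" using Xhat_completely_prime[OF y A] by blast
  then show ?thesis unfolding A_def by auto
qed

lemma Xhat_down_base_Union: "finite F \<Longrightarrow> F \<subseteq> \<Omega> \<Longrightarrow> y \<in> Xhat \<Omega> \<Longrightarrow> down_base \<Omega> (\<Union>F) \<in> y
   \<Longrightarrow> \<exists>W\<in>F. down_base \<Omega> W \<in> y"
proof (induction F rule: finite_induct)
  case empty then show ?case using down_base_empty_notin_Xhat by simp
next
  case (insert x F)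
  have "\<Union>F \<in> \<Omega>" using insert base_Union by simp
  then have "down_base \<Omega> x \<in> y \<or> down_base \<Omega> (\<Union>F) \<in> y"
    using Xhat_down_base_Un[of y x "\<Union>F"] insert.prems by simp
  then show ?case using insert.IH insert.prems by blast
qed

lemma Xhat_down_base_Inter: "finite F \<Longrightarrow> F \<subseteq> \<Omega> \<Longrightarrow> y \<in> Xhat \<Omega> \<Longrightarrow> (\<forall>W\<in>F. down_base \<Omega> W \<in> y)
   \<Longrightarrow> down_base \<Omega> (topspace X \<inter> \<Inter>F) \<in> y"
proof (induction F rule: finite_induct)
  case empty then show ?case using base_in_Xhat down_base_topspace by simp
next
  case (insert x F)
  have e: "topspace X \<inter> \<Inter>(insert x F) = x \<inter> (topspace X \<inter> \<Inter>F)" by auto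
  have a: "down_base \<Omega> x \<in> y" using insert.prems by simp
  have b: "down_base \<Omega> (topspace X \<inter> \<Inter>F) \<in> y" using insert.IH insert.prems by simp
  show ?case using Xhat_Int[OF insert.prems(2) a b] by (simp only: e down_base_Int[of x])
qed

text \<open>Take x in the intersection of the members W of F with \<open>down_base \<Omega> W \<in> y\<close> but outside
  the union of the others; it exists because y is prime for finite unions and closed under finite
  intersections.\<close>

lemma Xhat_agrees_with_point:
  assumes y: "y \<in> Xhat \<Omega>" and F: "finite F" "F \<subseteq> \<Omega>"
  obtains x where "x \<in> topspace X" "\<forall>W\<in>F. down_base \<Omega> W \<in> y \<longleftrightarrow> x \<in> W"
proof -
  define S where "S = {W\<in>F. down_base \<Omega> W \<in> y}"
  define V where "V = topspace X \<inter> \<Inter>S"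
  define R where "R = \<Union>(F - S)"
  have Sf: "finite S" "S \<subseteq> \<Omega>" using F unfolding S_def by auto
  have Vy: "down_base \<Omega> V \<in> y" unfolding V_def using Xhat_down_base_Inter[OF Sf y] S_def by blast
  have R: "R \<in> \<Omega>" unfolding R_def using F by (intro base_Union) auto
  have "\<not> V \<subseteq> R"
  proof
    assume "V \<subseteq> R"
    then have "down_base \<Omega> R \<in> y"
      using Xhat_upward[OF y Vy down_base_in_Idl[OF R]] down_base_mono by blast
    then obtain W where "W \<in> F - S" "down_base \<Omega> W \<in> y"
      using Xhat_down_base_Union[of "F - S" y] F y unfolding R_def by auto
    then show False unfolding S_def by blast
  qed
  then obtain x where x: "x \<in> V" "x \<notin> R" by blast
  show ?thesis
  proof (rule that)
    show "x \<in> topspace X" using x V_def by blast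
    show "\<forall>W\<in>F. down_base \<Omega> W \<in> y \<longleftrightarrow> x \<in> W" using x unfolding V_def R_def S_def by blast
  qed
qed

lemma iota_in_Xhat:
  assumes x: "x \<in> topspace X"
  shows "iota \<Omega> x \<in> Xhat \<Omega>"
proof -
  have "cp_filter \<Omega> (iota \<Omega> x)"
    unfolding cp_filter_def
  proof (intro conjI ballI allI impI)
    show "iota \<Omega> x \<subseteq> Idl \<Omega>" unfolding iota_def by blast
    show "iota \<Omega> x \<noteq> {}" unfolding iota_def using base_in_Idl topspace_in_base x by blast
    fix I assume I: "I \<in> iota \<Omega> x"
    show "J \<in> iota \<Omega> x" if "J \<in> Idl \<Omega>" "I \<subseteq> J" for J using that I unfolding iota_def by blast
    show "I \<inter> J \<in> iota \<Omega> x" if J: "J \<in> iota \<Omega> x" for J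
    proof -
      obtain U V where UV: "U \<in> I" "V \<in> J" "x \<in> U" "x \<in> V" using I J unfolding iota_def by blast
      have II: "I \<in> Idl \<Omega>" "J \<in> Idl \<Omega>" using I J unfolding iota_def by auto
      then have "U \<inter> V \<in> \<Omega>" using UV Idl_subset_base base_Int by blast
      then have "U \<inter> V \<in> I \<inter> J" using II UV Idl_downward by blast
      then show ?thesis using UV Idl_Int[OF II] unfolding iota_def by blast
    qed
  next
    fix A assume A: "A \<subseteq> Idl \<Omega>" and x_Sup: "idl_Sup \<Omega> A \<in> iota \<Omega> x"
    txt \<open>The ideal generated by \<open>\<Union>A\<close> consists of the basic sets covered by finitely many members
      of \<open>\<Union>A\<close>.\<close>
    define G where "G = {V\<in>\<Omega>. \<exists>F. finite F \<and> F \<subseteq> \<Union>A \<and> V \<subseteq> \<Union>F}"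
    have G: "G \<in> Idl \<Omega>"
    proof (rule IdlI)
      show "G \<subseteq> \<Omega>" unfolding G_def by blast
      show "{} \<in> G" unfolding G_def using empty_in_base by blast
      show "V \<in> G" if "U \<in> G" "V \<in> \<Omega>" "V \<subseteq> U" for U V using that unfolding G_def by blast
      show "U \<union> V \<in> G" if UV: "U \<in> G" "V \<in> G" for U V
      proof -
        obtain F1 where F1: "finite F1" "F1 \<subseteq> \<Union>A" "U \<subseteq> \<Union>F1" using UV(1) unfolding G_def by blast
        obtain F2 where F2: "finite F2" "F2 \<subseteq> \<Union>A" "V \<subseteq> \<Union>F2" using UV(2) unfolding G_def by blast
        have "U \<union> V \<in> \<Omega>" using UV base_Un unfolding G_def by blast
        moreover have "finite (F1 \<union> F2)" "F1 \<union> F2 \<subseteq> \<Union>A" "U \<union> V \<subseteq> \<Union>(F1 \<union> F2)" using F1 F2 by auto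
        ultimately show ?thesis unfolding G_def by blast
      qed
    qed
    have "\<Union>A \<subseteq> G" unfolding G_def using A Idl_subset_base
      by (auto intro!: exI[where x="{_}"])
    then have "idl_Sup \<Omega> A \<subseteq> G" using idl_Sup_least[OF G] by blast
    then obtain V where "V \<in> G" "x \<in> V" using x_Sup unfolding iota_def by blast
    then obtain F where "F \<subseteq> \<Union>A" "x \<in> \<Union>F" unfolding G_def by blast
    then show "A \<inter> iota \<Omega> x \<noteq> {}" using A unfolding iota_def by blast
  qed
  then show ?thesis by (simp add: Xhat_def)
qed

lemma down_base_in_iota_iff: "W \<in> \<Omega> \<Longrightarrow> down_base \<Omega> W \<in> iota \<Omega> x \<longleftrightarrow> x \<in> W"
  unfolding iota_def using down_base_in_Idl down_base_self by (auto simp: down_base_def)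

lemma iota_notin_Xhat: "x \<notin> topspace X \<Longrightarrow> iota \<Omega> x \<notin> Xhat \<Omega>"
proof
  assume x: "x \<notin> topspace X" and "iota \<Omega> x \<in> Xhat \<Omega>"
  then obtain I where "I \<in> iota \<Omega> x" using Xhat_nonempty by blast
  then have "I \<in> Idl \<Omega>" "x \<in> \<Union>I" unfolding iota_def by auto
  then obtain U where "U \<in> I" "x \<in> U" by blast
  then have "U \<in> \<Omega>" using Idl_subset_base \<open>I \<in> Idl \<Omega>\<close> by blast
  then show False using base_subset_topspace x \<open>x \<in> U\<close> by blast
qed

lemma mem_Ohat: "y \<in> Ohat \<Omega> I \<longleftrightarrow> y \<in> Xhat \<Omega> \<and> I \<in> y"
  by (simp add: Ohat_def)

lemma topspace_Xhat_top: "topspace (Xhat_top \<Omega>) = Xhat \<Omega>"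
  unfolding Xhat_top_def topology_generated_by_topspace
  using base_in_Xhat base_in_Idl by (auto simp: Ohat_def)

lemma Ohat_mono: "I \<subseteq> J \<Longrightarrow> J \<in> Idl \<Omega> \<Longrightarrow> Ohat \<Omega> I \<subseteq> Ohat \<Omega> J"
  unfolding Ohat_def using Xhat_upward by blast

lemma Xhat_principal:
  assumes y: "y \<in> Xhat \<Omega>" and I: "I \<in> y"
  shows "\<exists>U\<in>I. down_base \<Omega> U \<in> y"
proof -
  have II: "I \<in> Idl \<Omega>" using Xhat_subset_Idl[OF y I] .
  define A where "A = (\<lambda>U. down_base \<Omega> U) ` I"
  have A: "A \<subseteq> Idl \<Omega>" unfolding A_def using down_base_in_Idl Idl_subset_base[OF II] by blast
  have AO: "\<Union>A \<subseteq> \<Omega>" using A Idl_subset_base by blast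
  have "I \<subseteq> \<Union>A" unfolding A_def using down_base_self Idl_subset_base[OF II] by blast
  then have "I \<subseteq> idl_Sup \<Omega> A" using idl_Sup_upper[of A] by blast
  then have "idl_Sup \<Omega> A \<in> y" using Xhat_upward[OF y I idl_Sup_in_Idl[OF AO]] by simp
  then obtain J where "J \<in> A" "J \<in> y" using Xhat_completely_prime[OF y A] by blast
  then show ?thesis unfolding A_def by blast
qed

lemma Xhat_top_basic_neighbourhood:
  assumes "openin (Xhat_top \<Omega>) V"
  shows "y \<in> V \<Longrightarrow> y \<in> Xhat \<Omega> \<Longrightarrow>
    \<exists>U\<in>\<Omega>. down_base \<Omega> U \<in> y \<and> Ohat \<Omega> (down_base \<Omega> U) \<subseteq> V"
proof -
  have "generate_topology_on {Ohat \<Omega> I | I. I \<in> Idl \<Omega>} V"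
    using assms unfolding Xhat_top_def openin_topology_generated_by_iff .
  then show "y \<in> V \<Longrightarrow> y \<in> Xhat \<Omega> \<Longrightarrow> ?thesis"
  proof (induction arbitrary: y)
    case Empty then show ?case by simp
  next
    case (Int a b)
    then obtain U1 U2 where U: "U1 \<in> \<Omega>" "down_base \<Omega> U1 \<in> y" "Ohat \<Omega> (down_base \<Omega> U1) \<subseteq> a"
      "U2 \<in> \<Omega>" "down_base \<Omega> U2 \<in> y" "Ohat \<Omega> (down_base \<Omega> U2) \<subseteq> b" by (meson IntD1 IntD2)
    have "down_base \<Omega> (U1 \<inter> U2) \<in> y"
      unfolding down_base_Int using Xhat_Int[OF Int.prems(2)] U by simp
    moreover have "Ohat \<Omega> (down_base \<Omega> (U1 \<inter> U2)) \<subseteq> Ohat \<Omega> (down_base \<Omega> U1)"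
      "Ohat \<Omega> (down_base \<Omega> (U1 \<inter> U2)) \<subseteq> Ohat \<Omega> (down_base \<Omega> U2)"
      using U(1,4) by (simp_all add: Ohat_mono down_base_in_Idl down_base_mono)
    ultimately show ?case using U base_Int by (meson Int_greatest order_trans)
  next
    case (UN K)
    then obtain k where "k \<in> K" "y \<in> k" by blast
    then show ?case using UN.IH[of k y] UN.prems by blast
  next
    case (Basis s)
    then obtain I where I: "I \<in> Idl \<Omega>" "s = Ohat \<Omega> I" by blast
    then have "I \<in> y" using Basis.prems by (simp add: mem_Ohat)
    then obtain U where U: "U \<in> I" "down_base \<Omega> U \<in> y" using Xhat_principal Basis.prems by blast
    have UO: "U \<in> \<Omega>" using U I Idl_subset_base by blast
    have "down_base \<Omega> U \<subseteq> I" using Idl_downward[OF I(1) U(1)] unfolding down_base_def by blast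
    then have "Ohat \<Omega> (down_base \<Omega> U) \<subseteq> s" using I Ohat_mono by simp
    then show ?case using U UO by blast
  qed
qed

section \<open>Compactness of the basic open sets\<close>

lemma Idl_Union_chain:
  assumes C: "C \<noteq> {}" "C \<subseteq> Idl \<Omega>" "subset.chain C C"
  shows "\<Union>C \<in> Idl \<Omega>"
proof (rule IdlI)
  have comparable: "P \<subseteq> Q \<or> Q \<subseteq> P" if "P \<in> C" "Q \<in> C" for P Q
    using C(3) that unfolding subset_chain_def by blast
  show "\<Union>C \<subseteq> \<Omega>" using C(2) Idl_subset_base by blast
  show "{} \<in> \<Union>C" using C(1,2) empty_in_Idl by blast
  show "V \<in> \<Union>C" if UV: "U \<in> \<Union>C" "V \<in> \<Omega>" "V \<subseteq> U" for U V
  proof -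
    obtain P where "P \<in> C" "U \<in> P" using UV(1) by blast
    then show ?thesis using Idl_downward[of P U V] UV(2,3) C(2) by blast
  qed
  show "U \<union> V \<in> \<Union>C" if UV: "U \<in> \<Union>C" "V \<in> \<Union>C" for U V
  proof -
    obtain P Q where PQ: "P \<in> C" "U \<in> P" "Q \<in> C" "V \<in> Q" using UV by blast
    then obtain R where "R \<in> C" "U \<in> R" "V \<in> R" using comparable[OF PQ(1,3)] by blast
    then show ?thesis using Idl_Un C(2) by blast
  qed
qed

lemma maximal_ideal_avoiding:
  assumes J: "J \<in> Idl \<Omega>" and W: "W \<notin> J"
  obtains M where "M \<in> Idl \<Omega>" "J \<subseteq> M" "W \<notin> M"
    "\<And>P. P \<in> Idl \<Omega> \<Longrightarrow> M \<subseteq> P \<Longrightarrow> W \<notin> P \<Longrightarrow> P = M"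
proof -
  define AA where "AA = {P\<in>Idl \<Omega>. J \<subseteq> P \<and> W \<notin> P}"
  have "\<exists>M\<in>AA. \<forall>P\<in>AA. M \<subseteq> P \<longrightarrow> P = M"
  proof (rule subset_Zorn_nonempty)
    show "AA \<noteq> {}" using J W unfolding AA_def by blast
    fix C assume C: "C \<noteq> {}" "subset.chain AA C"
    then have "C \<subseteq> AA" "subset.chain C C" unfolding subset_chain_def by blast+
    moreover from this(1) have "C \<subseteq> Idl \<Omega>" unfolding AA_def by blast
    ultimately have "\<Union>C \<in> Idl \<Omega>" using Idl_Union_chain C(1) by blast
    then show "\<Union>C \<in> AA" using C(1) \<open>C \<subseteq> AA\<close> unfolding AA_def by blast
  qed
  then obtain M where M: "M \<in> AA" and maximal: "\<forall>P\<in>AA. M \<subseteq> P \<longrightarrow> P = M" by blast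
  show ?thesis
  proof (rule that)
    show "M \<in> Idl \<Omega>" "J \<subseteq> M" "W \<notin> M" using M unfolding AA_def by blast+
    show "P = M" if "P \<in> Idl \<Omega>" "M \<subseteq> P" "W \<notin> P" for P
      using that maximal \<open>J \<subseteq> M\<close> unfolding AA_def by blast
  qed
qed

text \<open>Otherwise W is covered modulo M both by U and by V, hence by \<open>U \<inter> V\<close>.\<close>

lemma maximal_ideal_avoiding_prime:
  assumes M: "M \<in> Idl \<Omega>" and W: "W \<in> \<Omega>" "W \<notin> M"
    and maximal: "\<And>P. P \<in> Idl \<Omega> \<Longrightarrow> M \<subseteq> P \<Longrightarrow> W \<notin> P \<Longrightarrow> P = M"
    and UV: "U \<in> \<Omega>" "V \<in> \<Omega>" "U \<inter> V \<in> M"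
  shows "U \<in> M \<or> V \<in> M"
proof -
  have cover: "\<exists>p\<in>M. W \<subseteq> p \<union> Z" if Z: "Z \<in> \<Omega>" "Z \<notin> M" for Z
  proof (rule ccontr)
    assume not_cover: "\<not> (\<exists>p\<in>M. W \<subseteq> p \<union> Z)"
    define G where "G = {Y\<in>\<Omega>. \<exists>p\<in>M. Y \<subseteq> p \<union> Z}"
    have "G \<in> Idl \<Omega>"
    proof (rule IdlI)
      show "G \<subseteq> \<Omega>" unfolding G_def by blast
      show "{} \<in> G" unfolding G_def using empty_in_base empty_in_Idl[OF M] by blast
      show "Y' \<in> G" if "Y \<in> G" "Y' \<in> \<Omega>" "Y' \<subseteq> Y" for Y Y' using that unfolding G_def by blast
      show "Y1 \<union> Y2 \<in> G" if Y: "Y1 \<in> G" "Y2 \<in> G" for Y1 Y2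
      proof -
        obtain p1 p2 where p: "p1 \<in> M" "Y1 \<subseteq> p1 \<union> Z" "p2 \<in> M" "Y2 \<subseteq> p2 \<union> Z"
          using Y unfolding G_def by blast
        have "p1 \<union> p2 \<in> M" using Idl_Un[OF M p(1,3)] .
        moreover have "Y1 \<union> Y2 \<in> \<Omega>" using Y base_Un unfolding G_def by blast
        moreover have "Y1 \<union> Y2 \<subseteq> (p1 \<union> p2) \<union> Z" using p by blast
        ultimately show ?thesis unfolding G_def by blast
      qed
    qed
    moreover have "M \<subseteq> G" unfolding G_def using Idl_subset_base[OF M] by blast
    moreover have "W \<notin> G" using not_cover unfolding G_def by blast
    ultimately have "G = M" by (rule maximal)
    moreover have "Z \<in> G" unfolding G_def using Z(1) empty_in_Idl[OF M] by blast
    ultimately show False using Z(2) by blast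
  qed
  show ?thesis
  proof (rule ccontr)
    assume "\<not> (U \<in> M \<or> V \<in> M)"
    then obtain p1 p2 where p: "p1 \<in> M" "W \<subseteq> p1 \<union> U" "p2 \<in> M" "W \<subseteq> p2 \<union> V"
      using cover[OF UV(1)] cover[OF UV(2)] by blast
    have "p1 \<union> p2 \<in> M" using Idl_Un[OF M p(1,3)] .
    then have "(p1 \<union> p2) \<union> (U \<inter> V) \<in> M" using Idl_Un[OF M _ UV(3)] by blast
    moreover have "W \<subseteq> (p1 \<union> p2) \<union> (U \<inter> V)" using p by blast
    ultimately have "W \<in> M" using Idl_downward[OF M _ W(1)] by blast
    then show False using W(2) by blast
  qed
qed

lemma prime_ideal_avoiding:
  assumes J: "J \<in> Idl \<Omega>" and W: "W \<in> \<Omega>" "W \<notin> J"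
  obtains P where "P \<in> Idl \<Omega>" "J \<subseteq> P" "W \<notin> P"
    "\<And>U V. U \<in> \<Omega> \<Longrightarrow> V \<in> \<Omega> \<Longrightarrow> U \<inter> V \<in> P \<Longrightarrow> U \<in> P \<or> V \<in> P"
proof -
  obtain M where M: "M \<in> Idl \<Omega>" "J \<subseteq> M" "W \<notin> M"
    and maximal: "\<And>P. P \<in> Idl \<Omega> \<Longrightarrow> M \<subseteq> P \<Longrightarrow> W \<notin> P \<Longrightarrow> P = M"
    using maximal_ideal_avoiding[OF J W(2)] by blast
  show ?thesis
    using that[OF M] maximal_ideal_avoiding_prime[OF M(1) W(1) M(3) maximal] by blast
qed

lemma prime_ideal_point:
  assumes P: "P \<in> Idl \<Omega>" "W \<in> \<Omega>" "W \<notin> P"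
    and prime: "\<And>U V. U \<in> \<Omega> \<Longrightarrow> V \<in> \<Omega> \<Longrightarrow> U \<inter> V \<in> P \<Longrightarrow> U \<in> P \<or> V \<in> P"
  shows "{I\<in>Idl \<Omega>. \<not> I \<subseteq> P} \<in> Xhat \<Omega>"
proof -
  define y where "y = {I\<in>Idl \<Omega>. \<not> I \<subseteq> P}"
  have "cp_filter \<Omega> y"
    unfolding cp_filter_def
  proof (intro conjI ballI allI impI)
    show "y \<subseteq> Idl \<Omega>" unfolding y_def by blast
    show "y \<noteq> {}" unfolding y_def using base_in_Idl P by blast
    fix I assume I: "I \<in> y"
    show "J \<in> y" if "J \<in> Idl \<Omega>" "I \<subseteq> J" for J using that I unfolding y_def by blast
    show "I \<inter> J \<in> y" if J: "J \<in> y" for J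
    proof -
      have II: "I \<in> Idl \<Omega>" "J \<in> Idl \<Omega>" using I J unfolding y_def by auto
      obtain U V where UV: "U \<in> I" "U \<notin> P" "V \<in> J" "V \<notin> P" using I J unfolding y_def by blast
      have UVO: "U \<in> \<Omega>" "V \<in> \<Omega>" using UV II Idl_subset_base by blast+
      then have "U \<inter> V \<in> I" "U \<inter> V \<in> J" using Idl_downward base_Int II UV by blast+
      moreover have "U \<inter> V \<notin> P" using prime UVO UV by blast
      ultimately show "I \<inter> J \<in> y" using Idl_Int[OF II] unfolding y_def by blast
    qed
  next
    fix A assume A: "A \<subseteq> Idl \<Omega>" "idl_Sup \<Omega> A \<in> y"
    show "A \<inter> y \<noteq> {}"
    proof
      assume "A \<inter> y = {}"
      then have "\<Union>A \<subseteq> P" using A(1) unfolding y_def by blast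
      then show False using A(2) idl_Sup_least[OF P(1)] unfolding y_def by blast
    qed
  qed
  then show ?thesis unfolding y_def Xhat_def by simp
qed

lemma Ohat_down_base_empty: "Ohat \<Omega> (down_base \<Omega> {}) = {}"
  using down_base_empty_notin_Xhat by (auto simp: mem_Ohat)

lemma Ohat_down_base_Un:
  "U1 \<in> \<Omega> \<Longrightarrow> U2 \<in> \<Omega> \<Longrightarrow>
    Ohat \<Omega> (down_base \<Omega> (U1 \<union> U2)) \<subseteq> Ohat \<Omega> (down_base \<Omega> U1) \<union> Ohat \<Omega> (down_base \<Omega> U2)"
proof
  fix y assume "U1 \<in> \<Omega>" "U2 \<in> \<Omega>" "y \<in> Ohat \<Omega> (down_base \<Omega> (U1 \<union> U2))"
  then show "y \<in> Ohat \<Omega> (down_base \<Omega> U1) \<union> Ohat \<Omega> (down_base \<Omega> U2)"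
    using Xhat_down_base_Un[of y U1 U2] by (simp add: mem_Ohat)
qed

lemma covered_base_Idl:
  assumes ne: "VV \<noteq> {}" and dir: "\<forall>V1\<in>VV. \<forall>V2\<in>VV. \<exists>V3\<in>VV. V1 \<union> V2 \<subseteq> V3"
  shows "{U\<in>\<Omega>. \<exists>V\<in>VV. Ohat \<Omega> (down_base \<Omega> U) \<subseteq> V} \<in> Idl \<Omega>" (is "?J \<in> _")
proof (rule IdlI)
  show "?J \<subseteq> \<Omega>" by blast
  show "{} \<in> ?J" using empty_in_base Ohat_down_base_empty ne by blast
  show "U' \<in> ?J" if U: "U \<in> ?J" "U' \<in> \<Omega>" "U' \<subseteq> U" for U U'
  proof -
    obtain V where V: "V \<in> VV" "Ohat \<Omega> (down_base \<Omega> U) \<subseteq> V" using U(1) by blast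
    have "U \<in> \<Omega>" using U(1) by blast
    then have "Ohat \<Omega> (down_base \<Omega> U') \<subseteq> Ohat \<Omega> (down_base \<Omega> U)"
      by (intro Ohat_mono down_base_mono U(3) down_base_in_Idl)
    then show ?thesis using U(2) V by blast
  qed
  show "U1 \<union> U2 \<in> ?J" if U: "U1 \<in> ?J" "U2 \<in> ?J" for U1 U2
  proof -
    obtain V1 V2 where V: "V1 \<in> VV" "Ohat \<Omega> (down_base \<Omega> U1) \<subseteq> V1"
      "V2 \<in> VV" "Ohat \<Omega> (down_base \<Omega> U2) \<subseteq> V2" using U by blast
    obtain V3 where V3: "V3 \<in> VV" "V1 \<union> V2 \<subseteq> V3" using dir V by blast
    have base: "U1 \<in> \<Omega>" "U2 \<in> \<Omega>" using U by blast+
    then have "Ohat \<Omega> (down_base \<Omega> (U1 \<union> U2)) \<subseteq> V3"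
      using Ohat_down_base_Un[OF base] V V3 by blast
    moreover have "U1 \<union> U2 \<in> \<Omega>" using base by (rule base_Un)
    ultimately show ?thesis using V3(1) by blast
  qed
qed

text \<open>If no member of the directed cover contains \<open>Ohat \<Omega> (down_base \<Omega> W)\<close>, a prime ideal
  avoiding W and containing all the covered basic sets gives a point of this set lying in no member
  of the cover.\<close>

lemma Ohat_down_base_compact:
  assumes W: "W \<in> \<Omega>" and ne: "VV \<noteq> {}"
    and op: "\<forall>V\<in>VV. openin (Xhat_top \<Omega>) V"
    and dir: "\<forall>V1\<in>VV. \<forall>V2\<in>VV. \<exists>V3\<in>VV. V1 \<union> V2 \<subseteq> V3"
    and cov: "Ohat \<Omega> (down_base \<Omega> W) \<subseteq> \<Union>VV"
  shows "\<exists>V\<in>VV. Ohat \<Omega> (down_base \<Omega> W) \<subseteq> V"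
proof (rule ccontr)
  assume not_covered: "\<not> (\<exists>V\<in>VV. Ohat \<Omega> (down_base \<Omega> W) \<subseteq> V)"
  define J where "J = {U\<in>\<Omega>. \<exists>V\<in>VV. Ohat \<Omega> (down_base \<Omega> U) \<subseteq> V}"
  have J: "J \<in> Idl \<Omega>" unfolding J_def by (rule covered_base_Idl[OF ne dir])
  have "W \<notin> J" using not_covered unfolding J_def by blast
  then obtain P where P: "P \<in> Idl \<Omega>" "J \<subseteq> P" "W \<notin> P"
    and prime: "\<And>U V. U \<in> \<Omega> \<Longrightarrow> V \<in> \<Omega> \<Longrightarrow> U \<inter> V \<in> P \<Longrightarrow> U \<in> P \<or> V \<in> P"
    using prime_ideal_avoiding[OF J W] by blast
  define y where "y = {I\<in>Idl \<Omega>. \<not> I \<subseteq> P}"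
  have y: "y \<in> Xhat \<Omega>" unfolding y_def using prime_ideal_point[OF P(1) W P(3) prime] .
  have "down_base \<Omega> W \<in> y"
    unfolding y_def using down_base_in_Idl[OF W] down_base_self[OF W] P(3) by blast
  then have "y \<in> Ohat \<Omega> (down_base \<Omega> W)" using y by (simp add: mem_Ohat)
  then obtain V where V: "V \<in> VV" "y \<in> V" using cov by blast
  then obtain U where U: "U \<in> \<Omega>" "down_base \<Omega> U \<in> y" "Ohat \<Omega> (down_base \<Omega> U) \<subseteq> V"
    using Xhat_top_basic_neighbourhood[of V y] op y by blast
  then have "U \<in> P" using V P(2) unfolding J_def by blast
  then have "down_base \<Omega> U \<subseteq> P" using Idl_downward[OF P(1)] unfolding down_base_def by blast
  then show False using U(2) unfolding y_def by blast
qed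

end

section \<open>Step functions on the two spaces\<close>

locale viable_basis_bc_domain = viable_basis X \<Omega> + bc_domain D0
  for X :: "'a topology" and \<Omega> :: "'a set set" and D0 :: "'d::order set"
begin

abbreviation lift_opens :: "(nat \<Rightarrow> 'a set) \<Rightarrow> nat \<Rightarrow> 'a set set set set" where
  "lift_opens W \<equiv> \<lambda>i. Ohat \<Omega> (down_base \<Omega> (W i))"

lemma BhatE:
  assumes "f \<in> Bhat \<Omega> D0"
  obtains I b W where "f = step_join I b (lift_opens W)" "finite I"
    "\<forall>i\<in>I. W i \<in> \<Omega> \<and> b i \<in> D0" "consistent_family I b (lift_opens W)"
  using assms unfolding Bhat_def by blast

lemma BhatI:
  "finite I \<Longrightarrow> \<forall>i\<in>I. W i \<in> \<Omega> \<and> b i \<in> D0 \<Longrightarrow> consistent_family I b (lift_opens W)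
    \<Longrightarrow> step_join I b (lift_opens W) \<in> Bhat \<Omega> D0"
  unfolding Bhat_def by blast

lemma B_absE:
  assumes "f \<in> B_abs \<Omega> D0"
  obtains I b W where "f = step_join I b W" "finite I"
    "\<forall>i\<in>I. W i \<in> \<Omega> \<and> b i \<in> D0" "consistent_family I b W"
  using assms unfolding B_abs_def by blast

lemma B_absI:
  "finite I \<Longrightarrow> \<forall>i\<in>I. W i \<in> \<Omega> \<and> b i \<in> D0 \<Longrightarrow> consistent_family I b W
    \<Longrightarrow> step_join I b W \<in> B_abs \<Omega> D0"
  unfolding B_abs_def by blast

lemma iota_in_lift_opens_iff:
  "W \<in> \<Omega> \<Longrightarrow> x \<in> topspace X \<Longrightarrow> iota \<Omega> x \<in> Ohat \<Omega> (down_base \<Omega> W) \<longleftrightarrow> x \<in> W"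
  using iota_in_Xhat down_base_in_iota_iff by (simp add: mem_Ohat)

lemma step_join_lift_comp_iota:
  assumes W: "\<forall>i\<in>I. W i \<in> \<Omega>"
  shows "step_join I b (lift_opens W) \<circ> iota \<Omega> = step_join I b W"
proof
  fix x
  have "{i\<in>I. iota \<Omega> x \<in> lift_opens W i} = {i\<in>I. x \<in> W i}"
  proof (cases "x \<in> topspace X")
    case True
    then show ?thesis using W iota_in_lift_opens_iff by auto
  next
    case False
    then show ?thesis using W base_subset_topspace iota_notin_Xhat by (auto simp: mem_Ohat)
  qed
  then show "(step_join I b (lift_opens W) \<circ> iota \<Omega>) x = step_join I b W x"
    unfolding comp_apply by (rule step_join_cong)
qed

lemma step_join_lift_at_point:
  assumes y: "y \<in> Xhat \<Omega>" and x: "x \<in> topspace X"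
    and W: "\<forall>i\<in>I. W i \<in> \<Omega> \<and> (down_base \<Omega> (W i) \<in> y \<longleftrightarrow> x \<in> W i)"
  shows "step_join I b (lift_opens W) y = step_join I b (lift_opens W) (iota \<Omega> x)"
proof (rule step_join_cong)
  show "{i\<in>I. y \<in> lift_opens W i} = {i\<in>I. iota \<Omega> x \<in> lift_opens W i}"
    using W y x iota_in_lift_opens_iff by (auto simp: mem_Ohat)
qed

lemma step_join_lift_outside:
  fixes b :: "nat \<Rightarrow> 'd"
  shows "y \<notin> Xhat \<Omega> \<Longrightarrow> step_join I b (lift_opens W) y = dbot"
  by (rule step_join_outside) (simp add: mem_Ohat)

lemma openin_Ohat: "I \<in> Idl \<Omega> \<Longrightarrow> openin (Xhat_top \<Omega>) (Ohat \<Omega> I)"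
  unfolding Xhat_top_def openin_topology_generated_by_iff
  by (rule generate_topology_on.Basis) blast

lemma Bhat_subset_cont_fun_space: "Bhat \<Omega> D0 \<subseteq> cont_fun_space (Xhat_top \<Omega>)"
proof
  fix f assume "f \<in> Bhat \<Omega> D0"
  then obtain I b W where f: "f = step_join I b (lift_opens W)" "finite I"
    "\<forall>i\<in>I. W i \<in> \<Omega> \<and> b i \<in> D0" "consistent_family I b (lift_opens W)"
    by (rule BhatE)
  show "f \<in> cont_fun_space (Xhat_top \<Omega>)"
    unfolding f(1) using f(2-4) openin_Ohat down_base_in_Idl
    by (intro step_join_in_cont_fun_space) auto
qed

lemma consistent_family_unlift:
  assumes W: "\<forall>i\<in>I. W i \<in> \<Omega>" and cons: "consistent_family I b (lift_opens W)"
  shows "consistent_family I b W"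
proof (rule consistent_family_transfer[OF cons])
  fix J assume J: "J \<subseteq> I" "(\<Inter>j\<in>J. W j) \<noteq> {}"
  show "(\<Inter>j\<in>J. lift_opens W j) \<noteq> {}"
  proof (cases "J = {}")
    case False
    then obtain j where "j \<in> J" by blast
    obtain x where x: "x \<in> (\<Inter>j\<in>J. W j)" using J(2) by blast
    then have "x \<in> topspace X" using base_subset_topspace W J(1) \<open>j \<in> J\<close> by blast
    then have "iota \<Omega> x \<in> lift_opens W j" if "j \<in> J" for j
      using iota_in_lift_opens_iff W J(1) x that by blast
    then show ?thesis by blast
  qed simp
qed

lemma consistent_family_lift:
  assumes I: "finite I" and W: "\<forall>i\<in>I. W i \<in> \<Omega>" and cons: "consistent_family I b W"
  shows "consistent_family I b (lift_opens W)"
proof (rule consistent_family_transfer[OF cons])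
  fix J assume J: "J \<subseteq> I" "(\<Inter>j\<in>J. lift_opens W j) \<noteq> {}"
  show "(\<Inter>j\<in>J. W j) \<noteq> {}"
  proof (cases "J = {}")
    case False
    obtain y where y: "y \<in> (\<Inter>j\<in>J. lift_opens W j)" using J(2) by blast
    with False have "y \<in> Xhat \<Omega>" by (auto simp: mem_Ohat)
    moreover have "finite (W ` I)" "W ` I \<subseteq> \<Omega>" using I W by auto
    ultimately obtain x where "x \<in> topspace X" and x: "\<forall>V\<in>W ` I. down_base \<Omega> V \<in> y \<longleftrightarrow> x \<in> V"
      by (rule Xhat_agrees_with_point)
    have "x \<in> W j" if "j \<in> J" for j
      using x y that J(1) by (auto simp: mem_Ohat)
    then show ?thesis by blast
  qed simp
qed

lemma inj_on_comp_iota_Bhat: "inj_on (\<lambda>f. f \<circ> iota \<Omega>) (Bhat \<Omega> D0)"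
proof (rule inj_onI)
  fix f g assume f: "f \<in> Bhat \<Omega> D0" and g: "g \<in> Bhat \<Omega> D0" and eq: "f \<circ> iota \<Omega> = g \<circ> iota \<Omega>"
  obtain I1 b1 W1 where
    f1: "f = step_join I1 b1 (lift_opens W1)" "finite I1" "\<forall>i\<in>I1. W1 i \<in> \<Omega> \<and> b1 i \<in> D0"
    using f by (rule BhatE)
  obtain I2 b2 W2 where
    g1: "g = step_join I2 b2 (lift_opens W2)" "finite I2" "\<forall>i\<in>I2. W2 i \<in> \<Omega> \<and> b2 i \<in> D0"
    using g by (rule BhatE)
  show "f = g"
  proof
    fix y
    show "f y = g y"
    proof (cases "y \<in> Xhat \<Omega>")
      case False
      then show ?thesis unfolding f1(1) g1(1) by (simp add: step_join_lift_outside)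
    next
      case True
      have "finite (W1 ` I1 \<union> W2 ` I2)" "W1 ` I1 \<union> W2 ` I2 \<subseteq> \<Omega>" using f1(2,3) g1(2,3) by auto
      then obtain x where x: "x \<in> topspace X"
        "\<forall>V\<in>W1 ` I1 \<union> W2 ` I2. down_base \<Omega> V \<in> y \<longleftrightarrow> x \<in> V"
        by (rule Xhat_agrees_with_point[OF True])
      have "\<forall>i\<in>I1. W1 i \<in> \<Omega> \<and> (down_base \<Omega> (W1 i) \<in> y \<longleftrightarrow> x \<in> W1 i)"
        using x(2) f1(3) by simp
      then have "f y = f (iota \<Omega> x)"
        unfolding f1(1) by (rule step_join_lift_at_point[OF True x(1)])
      also have "\<dots> = g (iota \<Omega> x)" using eq by (metis comp_apply)
      also have "\<forall>i\<in>I2. W2 i \<in> \<Omega> \<and> (down_base \<Omega> (W2 i) \<in> y \<longleftrightarrow> x \<in> W2 i)"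
        using x(2) g1(3) by simp
      then have "g (iota \<Omega> x) = g y"
        unfolding g1(1) by (rule step_join_lift_at_point[OF True x(1), symmetric])
      finally show ?thesis .
    qed
  qed
qed

lemma image_comp_iota_Bhat: "(\<lambda>f. f \<circ> iota \<Omega>) ` Bhat \<Omega> D0 = B_abs \<Omega> D0"
proof (intro equalityI subsetI)
  fix h assume "h \<in> (\<lambda>f. f \<circ> iota \<Omega>) ` Bhat \<Omega> D0"
  then obtain f where f: "f \<in> Bhat \<Omega> D0" "h = f \<circ> iota \<Omega>" by blast
  obtain I b W where f1: "f = step_join I b (lift_opens W)" "finite I" "\<forall>i\<in>I. W i \<in> \<Omega> \<and> b i \<in> D0"
    "consistent_family I b (lift_opens W)"
    using f(1) by (rule BhatE)
  have W: "\<forall>i\<in>I. W i \<in> \<Omega>" using f1(3) by blast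
  have "h = step_join I b W" using f(2) f1(1) step_join_lift_comp_iota[OF W] by simp
  moreover have "consistent_family I b W" using consistent_family_unlift[OF W f1(4)] .
  ultimately show "h \<in> B_abs \<Omega> D0" using B_absI f1(2,3) by simp
next
  fix h assume "h \<in> B_abs \<Omega> D0"
  then obtain I b W where h: "h = step_join I b W" "finite I" "\<forall>i\<in>I. W i \<in> \<Omega> \<and> b i \<in> D0"
    "consistent_family I b W"
    by (rule B_absE)
  have W: "\<forall>i\<in>I. W i \<in> \<Omega>" using h(3) by blast
  have "step_join I b (lift_opens W) \<in> Bhat \<Omega> D0"
    using BhatI[OF h(2,3) consistent_family_lift[OF h(2) W h(4)]] .
  moreover have "h = step_join I b (lift_opens W) \<circ> iota \<Omega>"
    unfolding h(1) by (rule step_join_lift_comp_iota[OF W, symmetric])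
  ultimately show "h \<in> (\<lambda>f. f \<circ> iota \<Omega>) ` Bhat \<Omega> D0" by blast
qed

lemma lift_opens_interleave:
  "lift_opens (interleave V1 V2) = interleave (lift_opens V1) (lift_opens V2)"
  by (simp add: interleave_def fun_eq_iff)

lemma Bhat_way_below_directed: "dom_directed {h \<in> Bhat \<Omega> D0. \<forall>y. h y \<lless> g y}"
  unfolding dom_directed_def
proof (intro conjI ballI)
  have "consistent_family {} b (lift_opens W)" for b :: "nat \<Rightarrow> 'd" and W
    by (simp add: consistent_family_def)
  then have "step_join {} b (lift_opens W) \<in> Bhat \<Omega> D0" for b :: "nat \<Rightarrow> 'd" and W
    by (intro BhatI) auto
  moreover have "step_join {} b (lift_opens W) y \<lless> g y" for b :: "nat \<Rightarrow> 'd" and W y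
    using step_join_outside[of "{}" y] dbot_way_below by simp
  ultimately show "{h \<in> Bhat \<Omega> D0. \<forall>y. h y \<lless> g y} \<noteq> {}" by blast
next
  fix h1 h2 assume h: "h1 \<in> {h \<in> Bhat \<Omega> D0. \<forall>y. h y \<lless> g y}" "h2 \<in> {h \<in> Bhat \<Omega> D0. \<forall>y. h y \<lless> g y}"
  obtain J1 c1 V1 where h1: "h1 = step_join J1 c1 (lift_opens V1)" "finite J1"
    "\<forall>i\<in>J1. V1 i \<in> \<Omega> \<and> c1 i \<in> D0" "consistent_family J1 c1 (lift_opens V1)"
    using h(1) by (blast elim: BhatE)
  obtain J2 c2 V2 where h2: "h2 = step_join J2 c2 (lift_opens V2)" "finite J2"
    "\<forall>i\<in>J2. V2 i \<in> \<Omega> \<and> c2 i \<in> D0" "consistent_family J2 c2 (lift_opens V2)"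
    using h(2) by (blast elim: BhatE)
  have below: "h1 y \<lless> g y" "h2 y \<lless> g y" for y using h by blast+
  define h3 where
    "h3 = step_join (interleave_index J1 J2) (interleave c1 c2) (lift_opens (interleave V1 V2))"
  have lub: "is_lub_in UNIV
      ({c1 i | i. i \<in> J1 \<and> y \<in> lift_opens V1 i} \<union> {c2 i | i. i \<in> J2 \<and> y \<in> lift_opens V2 i})
      (h3 y)" for y
    unfolding h3_def lift_opens_interleave
    using below[of y] way_below_imp_le h1(1) h2(1)
    by (intro step_join_interleave_lub[where u = "g y"] h1(4) h2(4)) auto
  have cons:
    "consistent_family (interleave_index J1 J2) (interleave c1 c2) (lift_opens (interleave V1 V2))"
    unfolding lift_opens_interleave
    using below way_below_imp_le h1(1) h2(1)
    by (intro consistent_family_interleave[where g = g] h1(4) h2(4)) auto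
  have "h3 \<in> Bhat \<Omega> D0"
    unfolding h3_def using h1(2,3) h2(2,3) cons
    by (intro BhatI finite_interleave_index) (auto simp: interleave_index_def)
  moreover have "h3 y \<lless> g y" for y
    using way_below_lub_Un[OF step_join_lub[OF h1(4)] _ step_join_lub[OF h2(4)] _ lub]
      below h1(1) h2(1)
    by simp
  moreover have "h1 \<le> h3" "h2 \<le> h3"
    using is_lub_in_least[OF step_join_lub[OF h1(4)]] is_lub_in_least[OF step_join_lub[OF h2(4)]]
      is_lub_in_upper[OF lub] h1(1) h2(1) by (auto simp: le_fun_def)
  ultimately show "\<exists>h3\<in>{h \<in> Bhat \<Omega> D0. \<forall>y. h y \<lless> g y}. h1 \<le> h3 \<and> h2 \<le> h3" by blast
qed

lemma Bhat_lower_neighbourhood: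
  assumes g: "g \<in> Bhat \<Omega> D0" and y: "y \<in> Xhat \<Omega>"
  obtains V where "V \<in> \<Omega>" "down_base \<Omega> V \<in> y" "\<And>y'. y' \<in> Ohat \<Omega> (down_base \<Omega> V) \<Longrightarrow> g y \<le> g y'"
proof -
  obtain I b W where g1: "g = step_join I b (lift_opens W)" "finite I"
    "\<forall>i\<in>I. W i \<in> \<Omega> \<and> b i \<in> D0" "consistent_family I b (lift_opens W)"
    using g by (rule BhatE)
  define T where "T = {i\<in>I. y \<in> lift_opens W i}"
  define V where "V = topspace X \<inter> \<Inter>(W ` T)"
  have T: "finite (W ` T)" "W ` T \<subseteq> \<Omega>" unfolding T_def using g1(2,3) by auto
  show ?thesis
  proof (rule that)
    show "V \<in> \<Omega>" unfolding V_def using T by (rule base_Inter)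
    show "down_base \<Omega> V \<in> y"
      unfolding V_def using T y by (intro Xhat_down_base_Inter) (auto simp: T_def mem_Ohat)
    fix y' assume y': "y' \<in> Ohat \<Omega> (down_base \<Omega> V)"
    have "i \<in> I \<and> y' \<in> lift_opens W i" if "i \<in> T" for i
    proof -
      have "V \<subseteq> W i" "W i \<in> \<Omega>" "i \<in> I" using that g1(3) unfolding V_def T_def by auto
      then have "down_base \<Omega> (W i) \<in> y'"
        using y' Xhat_upward down_base_in_Idl down_base_mono by (auto simp: mem_Ohat)
      then show ?thesis using y' \<open>i \<in> I\<close> by (simp add: mem_Ohat)
    qed
    then have "T \<subseteq> {i\<in>I. y' \<in> lift_opens W i}" by blast
    then show "g y \<le> g y'" unfolding g1(1) T_def by (rule step_join_mono[OF g1(4)])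
  qed
qed

text \<open>A basis element c way below \<open>g y\<close> is the value at y of a step function pointwise way below g,
  namely c on the neighbourhood of y given by the previous lemma.\<close>

lemma Bhat_way_below_lub:
  assumes g: "g \<in> Bhat \<Omega> D0"
  shows "is_lub_in (cont_fun_space (Xhat_top \<Omega>)) {h \<in> Bhat \<Omega> D0. \<forall>y. h y \<lless> g y} g"
  unfolding is_lub_in_def
proof (intro conjI ballI allI impI)
  show "g \<in> cont_fun_space (Xhat_top \<Omega>)" using g Bhat_subset_cont_fun_space by blast
  show "h \<le> g" if "h \<in> {h \<in> Bhat \<Omega> D0. \<forall>y. h y \<lless> g y}" for h
    using that way_below_imp_le by (auto simp: le_fun_def)
next
  fix u assume u: "u \<in> cont_fun_space (Xhat_top \<Omega>)" "\<forall>h\<in>{h \<in> Bhat \<Omega> D0. \<forall>y. h y \<lless> g y}. h \<le> u"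
  show "g \<le> u"
  proof (rule le_funI)
    fix y
    show "g y \<le> u y"
    proof (cases "y \<in> Xhat \<Omega>")
      case False
      obtain I b W where "g = step_join I b (lift_opens W)" using g by (rule BhatE)
      then have "g y = dbot" using False by (simp add: step_join_lift_outside)
      then show ?thesis by (simp add: dbot_least)
    next
      case True
      obtain V where V: "V \<in> \<Omega>" "down_base \<Omega> V \<in> y"
        and mono: "\<And>y'. y' \<in> Ohat \<Omega> (down_base \<Omega> V) \<Longrightarrow> g y \<le> g y'"
        using Bhat_lower_neighbourhood[OF g True] by blast
      have "c \<le> u y" if c: "c \<in> D0" "c \<lless> g y" for c
      proof -
        define hc where "hc = step_join {0} (\<lambda>_. c) (lift_opens (\<lambda>_. V))"
        have hc_eq: "hc y' = (if y' \<in> Ohat \<Omega> (down_base \<Omega> V) then c else dbot)" for y'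
          unfolding hc_def by (rule step_join_single)
        have "hc \<in> Bhat \<Omega> D0"
          unfolding hc_def using V c by (intro BhatI) (auto simp: consistent_family_def)
        moreover have "hc y' \<lless> g y'" for y'
          using hc_eq mono way_below_mono[OF order_refl c(2)] dbot_way_below by auto
        ultimately have "hc \<le> u" using u(2) by blast
        then have "hc y \<le> u y" by (rule le_funD)
        then show ?thesis using hc_eq True V(2) by (simp add: mem_Ohat)
      qed
      then show ?thesis using is_lub_in_least[OF basis_approximants_lub[of "g y"]] by blast
    qed
  qed
qed

lemma way_below_imp_abs_prec:
  assumes f: "f \<in> Bhat \<Omega> D0" and g: "g \<in> Bhat \<Omega> D0"
    and below: "way_below_in (cont_fun_space (Xhat_top \<Omega>)) f g"
  shows "abs_prec \<Omega> D0 (f \<circ> iota \<Omega>) (g \<circ> iota \<Omega>)"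
proof -
  obtain I b W where f1: "f = step_join I b (lift_opens W)" "finite I"
    "\<forall>i\<in>I. W i \<in> \<Omega> \<and> b i \<in> D0" "consistent_family I b (lift_opens W)"
    using f by (rule BhatE)
  have W: "\<forall>i\<in>I. W i \<in> \<Omega>" using f1(3) by blast
  define S where "S = {h \<in> Bhat \<Omega> D0. \<forall>y. h y \<lless> g y}"
  have "S \<subseteq> cont_fun_space (Xhat_top \<Omega>)" unfolding S_def using Bhat_subset_cont_fun_space by blast
  moreover have "dom_directed S" unfolding S_def by (rule Bhat_way_below_directed)
  moreover have "is_lub_in (cont_fun_space (Xhat_top \<Omega>)) S g"
    unfolding S_def by (rule Bhat_way_below_lub[OF g])
  ultimately obtain d where d: "d \<in> S" "f \<le> d"
    using below[unfolded way_below_in_def, rule_format, OF _ _ _ order_refl] by blast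
  show ?thesis
    unfolding abs_prec_def
  proof (intro exI conjI)
    show "consistent_family I b W" by (rule consistent_family_unlift[OF W f1(4)])
    show "f \<circ> iota \<Omega> = step_join I b W" unfolding f1(1) by (rule step_join_lift_comp_iota[OF W])
    show "\<forall>i\<in>I. W i \<subseteq> (g \<circ> iota \<Omega>) -` {d. b i \<lless> d}"
    proof (intro ballI subsetI)
      fix i x assume i: "i \<in> I" and x: "x \<in> W i"
      then have "x \<in> topspace X" using W base_subset_topspace by blast
      then have "iota \<Omega> x \<in> lift_opens W i" using iota_in_lift_opens_iff W i x by blast
      then have "b i \<le> f (iota \<Omega> x)" unfolding f1(1) by (rule step_join_upper[OF f1(4) i])
      also have "\<dots> \<le> d (iota \<Omega> x)" using d(2) by (rule le_funD)
      finally have "b i \<lless> g (iota \<Omega> x)"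
        using d(1) way_below_mono[OF _ _ order_refl] unfolding S_def by blast
      then show "x \<in> (g \<circ> iota \<Omega>) -` {d. b i \<lless> d}" by simp
    qed
  qed (use f1 in auto)
qed

text \<open>Compactness of the basic open sets, transported to the function space.\<close>

lemma way_below_on_Ohat:
  fixes b :: 'd
  assumes W: "W \<in> \<Omega>"
    and S: "S \<subseteq> cont_fun_space (Xhat_top \<Omega>)" "dom_directed S"
      "is_lub_in (cont_fun_space (Xhat_top \<Omega>)) S s"
    and below: "\<And>y. y \<in> Ohat \<Omega> (down_base \<Omega> W) \<Longrightarrow> b \<lless> s y"
  obtains k where "k \<in> S" "\<And>y. y \<in> Ohat \<Omega> (down_base \<Omega> W) \<Longrightarrow> b \<lless> k y"
proof -
  define VV where "VV = (\<lambda>k. {y \<in> Xhat \<Omega>. b \<lless> k y}) ` S"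
  have ne: "VV \<noteq> {}" using dom_directed_nonempty[OF S(2)] unfolding VV_def by blast
  have op: "\<forall>V\<in>VV. openin (Xhat_top \<Omega>) V"
  proof
    fix V assume "V \<in> VV"
    then obtain k where k: "k \<in> S" "V = {y \<in> Xhat \<Omega>. b \<lless> k y}" unfolding VV_def by blast
    then have "\<forall>U. scott_open U \<longrightarrow> openin (Xhat_top \<Omega>) {y \<in> topspace (Xhat_top \<Omega>). k y \<in> U}"
      using S(1) unfolding cont_fun_space_def by blast
    then have "openin (Xhat_top \<Omega>) {y \<in> topspace (Xhat_top \<Omega>). k y \<in> {d. b \<lless> d}}"
      using scott_open_way_above[of b] by blast
    then show "openin (Xhat_top \<Omega>) V" unfolding k(2) topspace_Xhat_top by simp
  qed
  have mono: "b \<lless> k' y" if "b \<lless> k y" "k \<le> k'" for k k' :: "'a set set set \<Rightarrow> 'd" and y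
    using way_below_mono[OF order_refl that(1) le_funD[OF that(2)]] .
  have dir: "\<forall>V1\<in>VV. \<forall>V2\<in>VV. \<exists>V3\<in>VV. V1 \<union> V2 \<subseteq> V3"
  proof (intro ballI)
    fix V1 V2 assume "V1 \<in> VV" "V2 \<in> VV"
    then obtain k1 k2 where k: "k1 \<in> S" "V1 = {y \<in> Xhat \<Omega>. b \<lless> k1 y}"
      "k2 \<in> S" "V2 = {y \<in> Xhat \<Omega>. b \<lless> k2 y}" unfolding VV_def by blast
    obtain k3 where k3: "k3 \<in> S" "k1 \<le> k3" "k2 \<le> k3"
      using dom_directed_upper_bound[OF S(2) k(1) k(3)] by blast
    have "V1 \<union> V2 \<subseteq> {y \<in> Xhat \<Omega>. b \<lless> k3 y}"
      unfolding k(2,4) using mono[OF _ k3(2)] mono[OF _ k3(3)] by blast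
    moreover have "{y \<in> Xhat \<Omega>. b \<lless> k3 y} \<in> VV" unfolding VV_def using k3(1) by blast
    ultimately show "\<exists>V3\<in>VV. V1 \<union> V2 \<subseteq> V3" by blast
  qed
  have cov: "Ohat \<Omega> (down_base \<Omega> W) \<subseteq> \<Union>VV"
  proof
    fix y assume y: "y \<in> Ohat \<Omega> (down_base \<Omega> W)"
    obtain d where "d \<in> {k y | k. k \<in> S}" "d \<in> {d. b \<lless> d}"
      using scott_open_lub[OF scott_open_way_above dom_directed_pointwise[OF S(2)]
          cont_fun_space_lub_pointwise[OF S]] below[OF y] by blast
    then obtain k where "k \<in> S" "b \<lless> k y" by blast
    then show "y \<in> \<Union>VV" unfolding VV_def using y by (auto simp: mem_Ohat)
  qed
  obtain V where "V \<in> VV" and V: "Ohat \<Omega> (down_base \<Omega> W) \<subseteq> V"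
    using Ohat_down_base_compact[OF W ne op dir cov] by blast
  then obtain k where "k \<in> S" "V = {y \<in> Xhat \<Omega>. b \<lless> k y}" unfolding VV_def by blast
  then show ?thesis using that V by blast
qed

lemma abs_prec_imp_way_below:
  assumes f: "f \<in> Bhat \<Omega> D0" and g: "g \<in> Bhat \<Omega> D0"
    and prec: "abs_prec \<Omega> D0 (f \<circ> iota \<Omega>) (g \<circ> iota \<Omega>)"
  shows "way_below_in (cont_fun_space (Xhat_top \<Omega>)) f g"
proof -
  obtain I b Os where Os: "finite I" "\<forall>i\<in>I. Os i \<in> \<Omega> \<and> b i \<in> D0" "consistent_family I b Os"
    "f \<circ> iota \<Omega> = step_join I b Os" "\<forall>i\<in>I. Os i \<subseteq> (g \<circ> iota \<Omega>) -` {d. b i \<lless> d}"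
    using prec unfolding abs_prec_def by blast
  have O: "\<forall>i\<in>I. Os i \<in> \<Omega>" using Os(2) by blast
  have cons: "consistent_family I b (lift_opens Os)"
    by (rule consistent_family_lift[OF Os(1) O Os(3)])
  have "step_join I b (lift_opens Os) \<in> Bhat \<Omega> D0" by (rule BhatI[OF Os(1,2) cons])
  moreover have "step_join I b (lift_opens Os) \<circ> iota \<Omega> = f \<circ> iota \<Omega>"
    using step_join_lift_comp_iota[OF O] Os(4) by simp
  ultimately have f_eq: "f = step_join I b (lift_opens Os)"
    using inj_onD[OF inj_on_comp_iota_Bhat _ _ f] by metis
  obtain I2 b2 W2 where g1: "g = step_join I2 b2 (lift_opens W2)" "finite I2"
    "\<forall>i\<in>I2. W2 i \<in> \<Omega> \<and> b2 i \<in> D0"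
    using g by (rule BhatE)
  have below_g: "b i \<lless> g y" if i: "i \<in> I" and y: "y \<in> lift_opens Os i" for i y
  proof -
    have yX: "y \<in> Xhat \<Omega>" and down: "down_base \<Omega> (Os i) \<in> y" using y by (simp_all add: mem_Ohat)
    have "finite (insert (Os i) (W2 ` I2))" "insert (Os i) (W2 ` I2) \<subseteq> \<Omega>" using g1(2,3) O i by auto
    then obtain x where x: "x \<in> topspace X"
      "\<forall>V\<in>insert (Os i) (W2 ` I2). down_base \<Omega> V \<in> y \<longleftrightarrow> x \<in> V"
      by (rule Xhat_agrees_with_point[OF yX])
    then have "x \<in> Os i" using down by blast
    then have "b i \<lless> g (iota \<Omega> x)" using Os(5) i by auto
    moreover have "\<forall>j\<in>I2. W2 j \<in> \<Omega> \<and> (down_base \<Omega> (W2 j) \<in> y \<longleftrightarrow> x \<in> W2 j)"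
      using x(2) g1(3) by simp
    then have "g y = g (iota \<Omega> x)" unfolding g1(1) by (rule step_join_lift_at_point[OF yX x(1)])
    ultimately show ?thesis by simp
  qed
  show ?thesis unfolding way_below_in_def
  proof (intro allI impI)
    fix S s assume S: "S \<subseteq> cont_fun_space (Xhat_top \<Omega>)" "dom_directed S"
      "is_lub_in (cont_fun_space (Xhat_top \<Omega>)) S s" "g \<le> s"
    have "\<exists>k. k \<in> S \<and> (\<forall>y\<in>lift_opens Os i. b i \<lless> k y)" if i: "i \<in> I" for i
    proof -
      have "b i \<lless> s y" if "y \<in> lift_opens Os i" for y
        using below_g[OF i that] S(4) way_below_mono[OF order_refl] by (auto simp: le_fun_def)
      then obtain k where "k \<in> S" "\<And>y. y \<in> lift_opens Os i \<Longrightarrow> b i \<lless> k y"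
        using way_below_on_Ohat[OF _ S(1-3)] O i by metis
      then show ?thesis by blast
    qed
    then obtain kk where kk: "\<forall>i\<in>I. kk i \<in> S \<and> (\<forall>y\<in>lift_opens Os i. b i \<lless> kk i y)"
      by metis
    obtain d where d: "d \<in> S" "\<forall>k\<in>kk ` I. k \<le> d"
      using dom_directed_finite_upper_bound[OF S(2)] Os(1) kk
      by (metis finite_imageI image_subset_iff)
    have "f \<le> d"
    proof (rule le_funI)
      fix y
      show "f y \<le> d y" unfolding f_eq
      proof (rule step_join_least)
        fix i assume i: "i \<in> I" "y \<in> lift_opens Os i"
        then have "b i \<le> kk i y" using kk way_below_imp_le by blast
        also have "\<dots> \<le> d y" using d(2) i(1) by (simp add: le_fun_def)
        finally show "b i \<le> d y" .
      qed
    qed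
    then show "\<exists>d\<in>S. f \<le> d" using d(1) by blast
  qed
qed

end

theorem mainTheorem18:
  fixes X :: "'a topology" and \<Omega>0 :: "'a set set" and D0 :: "'d::order set"
  assumes "viable_base X \<Omega>0"
    and "bc_domain_with_basis D0"
  shows "bij_betw (\<lambda>f. f \<circ> iota \<Omega>0) (Bhat \<Omega>0 D0) (B_abs \<Omega>0 D0)
    \<and> (\<forall>I b W. finite I \<longrightarrow> (\<forall>i\<in>I. W i \<in> \<Omega>0 \<and> b i \<in> D0) \<longrightarrow>
          consistent_family I b (\<lambda>i. Ohat \<Omega>0 (down_base \<Omega>0 (W i))) \<longrightarrow>
          step_join I b (\<lambda>i. Ohat \<Omega>0 (down_base \<Omega>0 (W i))) \<circ> iota \<Omega>0 = step_join I b W)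
    \<and> (\<forall>f\<in>Bhat \<Omega>0 D0. \<forall>g\<in>Bhat \<Omega>0 D0.
          way_below_in (cont_fun_space (Xhat_top \<Omega>0)) f g
          \<longleftrightarrow> abs_prec \<Omega>0 D0 (f \<circ> iota \<Omega>0) (g \<circ> iota \<Omega>0))"
proof -
  interpret viable_basis_bc_domain X \<Omega>0 D0
    using assms by (simp add: viable_basis_bc_domain_def viable_basis_def bc_domain_def)
  have "bij_betw (\<lambda>f. f \<circ> iota \<Omega>0) (Bhat \<Omega>0 D0) (B_abs \<Omega>0 D0)"
    unfolding bij_betw_def using inj_on_comp_iota_Bhat image_comp_iota_Bhat by blast
  moreover have "step_join I b (lift_opens W) \<circ> iota \<Omega>0 = step_join I b W"
    if "\<forall>i\<in>I. W i \<in> \<Omega>0 \<and> b i \<in> D0" for I b W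
    using that by (intro step_join_lift_comp_iota) blast
  moreover have "way_below_in (cont_fun_space (Xhat_top \<Omega>0)) f g
      \<longleftrightarrow> abs_prec \<Omega>0 D0 (f \<circ> iota \<Omega>0) (g \<circ> iota \<Omega>0)"
    if "f \<in> Bhat \<Omega>0 D0" "g \<in> Bhat \<Omega>0 D0" for f g
    using that way_below_imp_abs_prec abs_prec_imp_way_below by blast
  ultimately show ?thesis by blast
qed

end
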